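(* Let $\mu$ be a probability measure on $(0,1]$ whose support is $[0,1]$, and let $X,W\in L^1(\mathcal{D}_\mu)$. Then $u_\mu^c(X;W)=u_\mu(X)$ if and only if $X$ and $W$ are comonotone.
   Context: Let $(\Omega,\mathcal{F},\mathsf{P})$ be a probability space, $L^0$ the space of all real random variables, and $\mathcal{P}$ the set of probability measures on $\mathcal{F}$ absolutely continuous with respect to $\mathsf{P}$; measures are identified with their densities. For $\mathsf{Q}\in\mathcal{P}$, $\mathsf{E}_\mathsf{Q}X:=\mathsf{E}_\mathsf{Q}X^+-\mathsf{E}_\mathsf{Q}X^-$ with the convention $\infty-\infty=-\infty$. For $\lambda\in(0,1]$, let $\mathcal{D}_\lambda=\{\mathsf{Q}\in\mathcal{P}:d\mathsf{Q}/d\mathsf{P}\le\lambda^{-1}\}$ and $u_\lambda(X)=\inf_{\mathsf{Q}\in\mathcal{D}_\lambda}\mathsf{E}_\mathsf{Q}X$. For a probability measure $\mu$ on $(0,1]$, Weighted V@R utility is $u_\mu(X)=\int_{(0,1]}u_\lambda(X)\mu(d\lambda)$, $X\in L^0$, where $\int f\,d\mu:=\int f^+d\mu-\int f^-d\mu$ with $\infty-\infty=-\infty$; $u_\mu$ is a coherent utility, i.e. $u_\mu(X)=\inf_{\mathsf{Q}\in\mathcal{D}}\mathsf{E}_\mathsf{Q}X$ for some nonempty $\mathcal{D}\subseteq\mathcal{P}$, and $\mathcal{D}_\mu:=\{\mathsf{Q}\in\mathcal{P}:\mathsf{E}_\mathsf{Q}X\ge u_\mu(X)\ \forall X\in L^0\}$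 is its determining set. $L^1(\mathcal{D}_\mu):=\{X\in L^0:\lim_{n\to\infty}\sup_{\mathsf{Q}\in\mathcal{D}_\mu}\mathsf{E}_\mathsf{Q}|X|I(|X|>n)=0\}$. Extreme measures: $\mathcal{X}_{\mathcal{D}_\mu}(W)=\{\mathsf{Q}\in\mathcal{D}_\mu:\mathsf{E}_\mathsf{Q}W=u_\mu(W)\in(-\infty,\infty)\}$; utility contribution: $u_\mu^c(X;W)=\inf_{\mathsf{Q}\in\mathcal{X}_{\mathcal{D}_\mu}(W)}\mathsf{E}_\mathsf{Q}X$. Random variables $X,W$ are comonotone if $(X(\omega_2)-X(\omega_1))(W(\omega_2)-W(\omega_1))\ge0$ for $\mathsf{P}\times\mathsf{P}$-a.e. $(\omega_1,\omega_2)$. *)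

theory Defs
  imports "HOL-Probability.Probability"
begin

text \<open>Probability measures absolutely continuous w.r.t. P, identified with their densities.\<close>
definition is_density :: "'a measure \<Rightarrow> ('a \<Rightarrow> real) \<Rightarrow> bool" where
  "is_density M Z \<longleftrightarrow> Z \<in> borel_measurable M \<and> (\<forall>x\<in>space M. 0 \<le> Z x)
     \<and> (\<integral>\<^sup>+ x. ennreal (Z x) \<partial>M) = 1"

text \<open>Integral of an extended-real function: int f+ - int f-, with the convention inf - inf = -inf.\<close>
definition ext_int :: "'b measure \<Rightarrow> ('b \<Rightarrow> ereal) \<Rightarrow> ereal" where
  "ext_int N f = (let p = (\<integral>\<^sup>+ x. e2ennreal (max (f x) 0) \<partial>N);
                      n = (\<integral>\<^sup>+ x. e2ennreal (max (- f x) 0) \<partial>N)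
                  in if n = \<infinity> then -\<infinity> else enn2ereal p - enn2ereal n)"

definition expQ :: "'a measure \<Rightarrow> ('a \<Rightarrow> real) \<Rightarrow> ('a \<Rightarrow> real) \<Rightarrow> ereal" where
  "expQ M Z X = ext_int M (\<lambda>x. ereal (Z x * X x))"

definition D_lam :: "'a measure \<Rightarrow> real \<Rightarrow> ('a \<Rightarrow> real) set" where
  "D_lam M l = {Z. is_density M Z \<and> (AE x in M. Z x \<le> 1 / l)}"

definition u_lam :: "'a measure \<Rightarrow> real \<Rightarrow> ('a \<Rightarrow> real) \<Rightarrow> ereal" where
  "u_lam M l X = (INF Z\<in>D_lam M l. expQ M Z X)"

definition u_mu :: "'a measure \<Rightarrow> real measure \<Rightarrow> ('a \<Rightarrow> real) \<Rightarrow> ereal" where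
  "u_mu M mu X = ext_int mu (\<lambda>l. u_lam M l X)"

definition D_mu :: "'a measure \<Rightarrow> real measure \<Rightarrow> ('a \<Rightarrow> real) set" where
  "D_mu M mu = {Z. is_density M Z \<and> (\<forall>X\<in>borel_measurable M. u_mu M mu X \<le> expQ M Z X)}"

definition L1_D :: "'a measure \<Rightarrow> ('a \<Rightarrow> real) set \<Rightarrow> ('a \<Rightarrow> real) \<Rightarrow> bool" where
  "L1_D M D X \<longleftrightarrow> X \<in> borel_measurable M \<and>
     ((\<lambda>n::nat. SUP Z\<in>D. \<integral>\<^sup>+ x. ennreal (Z x * \<bar>X x\<bar> * indicator {y. \<bar>X y\<bar> > real n} x) \<partial>M)
        \<longlonglongrightarrow> 0)"

definition extreme_mu :: "'a measure \<Rightarrow> real measure \<Rightarrow> ('a \<Rightarrow> real) \<Rightarrow> ('a \<Rightarrow> real) set" where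
  "extreme_mu M mu W = {Z\<in>D_mu M mu. expQ M Z W = u_mu M mu W
      \<and> u_mu M mu W \<noteq> \<infinity> \<and> u_mu M mu W \<noteq> -\<infinity>}"

definition u_contrib :: "'a measure \<Rightarrow> real measure \<Rightarrow> ('a \<Rightarrow> real) \<Rightarrow> ('a \<Rightarrow> real) \<Rightarrow> ereal" where
  "u_contrib M mu X W = (INF Z\<in>extreme_mu M mu W. expQ M Z X)"

definition comonotone :: "'a measure \<Rightarrow> ('a \<Rightarrow> real) \<Rightarrow> ('a \<Rightarrow> real) \<Rightarrow> bool" where
  "comonotone M X W \<longleftrightarrow>
     (AE p in M \<Otimes>\<^sub>M M. 0 \<le> (X (snd p) - X (fst p)) * (W (snd p) - W (fst p)))"

definition measure_support :: "real measure \<Rightarrow> real set" where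
  "measure_support mu = {x. \<forall>e>0. 0 < emeasure mu (ball x e)}"

end

theory Submission
  imports Defs
begin

text \<open>
  For each level \<lambda> the infimum defining u_\<lambda>(Y) is attained by a tail density, which puts the
  maximal weight 1/\<lambda> on the lower \<lambda>-tail of Y (splitting an atom at the quantile if necessary).
  Since u_\<lambda> is superadditive, u_\<mu>^c(X; W) = u_\<mu>(X) forces u_\<mu>(X + W) = u_\<mu>(X) + u_\<mu>(W),
  hence u_\<lambda>(X + W) = u_\<lambda>(X) + u_\<lambda>(W) for \<mu>-almost every \<lambda>.  If X and W are not comonotone,
  there are levels x < x', w' < w with X < x, W > w and X > x', W < w' both on sets of positive
  probability, and then no single density can be optimal for X and for W simultaneously at any
  \<lambda> strictly between P(X \<le> x, W \<le> w') and P(W < w or X < x'); because the support of \<mu> is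
  [0, 1], these levels carry positive \<mu>-mass.  Conversely, if X and W are comonotone, the tail
  density of X + W is optimal for X and for W at every level, and its \<mu>-mixture is an extreme
  measure of W that attains u_\<mu>(X).
\<close>

section \<open>Extended integrals\<close>

lemma e2ennreal_max_zero_ereal: "e2ennreal (max (ereal r) 0) = ennreal r"
  by (metis e2ennreal_ereal e2ennreal_neg ennreal_neg max.absorb1 max.absorb2 zero_ereal_def
      linorder_le_cases)

lemma ext_int_ereal:
  "ext_int M (\<lambda>x. ereal (f x)) =
    (if (\<integral>\<^sup>+ x. ennreal (- f x) \<partial>M) = \<infinity> then -\<infinity>
     else enn2ereal (\<integral>\<^sup>+ x. ennreal (f x) \<partial>M) - enn2ereal (\<integral>\<^sup>+ x. ennreal (- f x) \<partial>M))"
  using e2ennreal_max_zero_ereal[of "- f _"]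
  unfolding ext_int_def Let_def by (simp add: e2ennreal_max_zero_ereal)

lemma ext_int_eq_integral:
  assumes "integrable M f"
  shows "ext_int M (\<lambda>x. ereal (f x)) = ereal (integral\<^sup>L M f)"
proof -
  from integrableE[OF assms] obtain r q where "0 \<le> r" "0 \<le> q"
    "(\<integral>\<^sup>+x. ennreal (f x) \<partial>M) = ennreal r" "(\<integral>\<^sup>+x. ennreal (- f x) \<partial>M) = ennreal q"
    "integral\<^sup>L M f = r - q"
    by metis
  then show ?thesis unfolding ext_int_ereal by simp
qed

lemma integrable_if_ext_int_finite:
  assumes "f \<in> borel_measurable M" "ext_int M (\<lambda>x. ereal (f x)) \<noteq> \<infinity>"
    "ext_int M (\<lambda>x. ereal (f x)) \<noteq> -\<infinity>"
  shows "integrable M f"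
  using assms unfolding ext_int_ereal real_integrable_def by (auto split: if_splits)

lemma (in prob_space) ext_int_const: "ext_int M (\<lambda>_. e) = e"
proof (cases e)
  case (real r)
  then show ?thesis
    using ext_int_eq_integral[of M "\<lambda>_. r"] by (simp add: prob_space)
qed (simp_all add: ext_int_def emeasure_space_1)

lemma ext_int_mono_AE:
  assumes "AE x in M. f x \<le> g x"
  shows "ext_int M f \<le> ext_int M g"
proof -
  have "(\<integral>\<^sup>+ x. e2ennreal (max (f x) 0) \<partial>M) \<le> (\<integral>\<^sup>+ x. e2ennreal (max (g x) 0) \<partial>M)"
    "(\<integral>\<^sup>+ x. e2ennreal (max (- g x) 0) \<partial>M) \<le> (\<integral>\<^sup>+ x. e2ennreal (max (- f x) 0) \<partial>M)"
    using assms by (auto intro!: nn_integral_mono_AE e2ennreal_mono max.mono elim!: eventually_mono)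
  then show ?thesis
    unfolding ext_int_def Let_def
    by (auto intro!: ereal_minus_mono simp: top_unique less_eq_ennreal.rep_eq[symmetric])
qed

lemma ext_int_cong_AE: "AE x in M. f x = g x \<Longrightarrow> ext_int M f = ext_int M g"
  by (metis (mono_tags, lifting) antisym eventually_mono ext_int_mono_AE order_refl)

lemma ext_int_enn2ereal_diff:
  fixes p n :: "'b \<Rightarrow> ennreal"
  assumes [measurable]: "p \<in> borel_measurable N" "n \<in> borel_measurable N"
    and fin: "(\<integral>\<^sup>+ x. n x \<partial>N) \<noteq> \<infinity>"
  shows "ext_int N (\<lambda>x. enn2ereal (p x) - enn2ereal (n x))
       = enn2ereal (\<integral>\<^sup>+ x. p x \<partial>N) - enn2ereal (\<integral>\<^sup>+ x. n x \<partial>N)"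
proof -
  define pos where "pos x = e2ennreal (max (enn2ereal (p x) - enn2ereal (n x)) 0)" for x
  define neg where "neg x = e2ennreal (max (- (enn2ereal (p x) - enn2ereal (n x))) 0)" for x
  have [measurable]: "pos \<in> borel_measurable N" "neg \<in> borel_measurable N"
    unfolding pos_def neg_def by measurable
  have "AE x in N. n x \<noteq> \<infinity>"
    using fin by (intro nn_integral_PInf_AE) auto
  then have "AE x in N. pos x + n x = p x + neg x \<and> neg x \<le> n x"
  proof eventually_elim
    case (elim x)
    then obtain b where b: "n x = ennreal b" "0 \<le> b" by (cases "n x") auto
    show ?case
    proof (cases "p x")
      case (real a)
      then have "pos x = ennreal (a - b)" "neg x = ennreal (b - a)"
        unfolding pos_def neg_def b using b(2) e2ennreal_max_zero_ereal by simp_all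
      then show ?thesis
        using real b by (cases "a \<le> b") (auto simp: ennreal_neg simp flip: ennreal_plus)
    qed (simp_all add: pos_def neg_def b)
  qed
  then have sum: "(\<integral>\<^sup>+ x. pos x \<partial>N) + (\<integral>\<^sup>+ x. n x \<partial>N) = (\<integral>\<^sup>+ x. p x \<partial>N) + (\<integral>\<^sup>+ x. neg x \<partial>N)"
    and "(\<integral>\<^sup>+ x. neg x \<partial>N) \<le> (\<integral>\<^sup>+ x. n x \<partial>N)"
    by (auto simp flip: nn_integral_add intro!: nn_integral_cong_AE nn_integral_mono_AE
        elim: eventually_mono)
  then have "(\<integral>\<^sup>+ x. neg x \<partial>N) \<noteq> \<infinity>" using fin by (auto simp: top_unique)
  with sum fin show ?thesis
    unfolding ext_int_def Let_def pos_def[symmetric] neg_def[symmetric]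
    by (cases "\<integral>\<^sup>+ x. pos x \<partial>N"; cases "\<integral>\<^sup>+ x. n x \<partial>N"; cases "\<integral>\<^sup>+ x. p x \<partial>N";
        cases "\<integral>\<^sup>+ x. neg x \<partial>N") (auto simp flip: ennreal_plus)
qed

section \<open>Quantiles\<close>

text \<open>The junk value 0 outside (0, 1) keeps quantile N Borel measurable on the whole real line.\<close>

definition quantile :: "real measure \<Rightarrow> real \<Rightarrow> real" where
  "quantile N l = (if 0 < l \<and> l < 1 then Inf {t. l \<le> cdf N t} else 0)"

context real_distribution
begin

lemma
  assumes l: "0 < l" "l < 1"
  shows quantile_le_iff: "quantile M l \<le> t \<longleftrightarrow> l \<le> cdf M t"
    and measure_lessThan_quantile: "measure M {..<quantile M l} \<le> l"
proof -
  define T where "T = {t. l \<le> cdf M t}"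
  have q: "quantile M l = Inf T" unfolding quantile_def T_def using l by simp
  have up: "s \<in> T" if "t \<in> T" "t \<le> s" for t s
    using that cdf_nondecreasing unfolding T_def by (meson mem_Collect_eq order_trans)
  have "eventually (\<lambda>t. l < cdf M t) at_top"
    using cdf_lim_at_top_prob l(2) by (rule order_tendstoD)
  then obtain t0 where "l < cdf M t0" unfolding eventually_at_top_linorder by blast
  then have ne: "T \<noteq> {}" unfolding T_def by (auto intro!: exI[of _ t0])
  have "eventually (\<lambda>t. cdf M t < l) at_bot"
    using cdf_lim_at_bot l(1) by (rule order_tendstoD)
  then obtain b where b: "\<forall>t\<le>b. cdf M t < l" unfolding eventually_at_bot_linorder by blast
  have "b \<le> t" if "t \<in> T" for t
    using that b[rule_format, of t] unfolding T_def by fastforce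
  then have bdd: "bdd_below T" by (rule bdd_belowI)
  have "eventually (\<lambda>t. l \<le> cdf M t) (at_right (quantile M l))"
    using eventually_at_right_less
  proof eventually_elim
    case (elim t)
    then obtain t' where "t' \<in> T" "t' < t" using cInf_lessD[OF ne] unfolding q by blast
    then show ?case using up unfolding T_def by auto
  qed
  then have "l \<le> cdf M (quantile M l)"
    using cdf_is_right_cont by (intro tendsto_lowerbound) (auto simp: continuous_within)
  then show "quantile M l \<le> t \<longleftrightarrow> l \<le> cdf M t"
    using cdf_nondecreasing cInf_lower[OF _ bdd] unfolding q T_def by (auto intro: order_trans)
  have "eventually (\<lambda>t. t < quantile M l) (at_left (quantile M l))"
    using eventually_at_left_real[of "quantile M l - 1" "quantile M l"] by (auto elim: eventually_mono)
  then have "eventually (\<lambda>t. cdf M t \<le> l) (at_left (quantile M l))"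
  proof eventually_elim
    case (elim t)
    then show ?case using cInf_lower[OF _ bdd, of t] unfolding q T_def by force
  qed
  then show "measure M {..<quantile M l} \<le> l"
    using cdf_at_left by (intro tendsto_upperbound) auto
qed

lemma borel_measurable_quantile[measurable]: "quantile M \<in> borel_measurable borel"
proof (subst borel_measurable_iff_le, intro allI)
  fix a :: real
  have "{l \<in> space borel. quantile M l \<le> a} =
      ({0<..<1} \<inter> {l. l \<le> cdf M a}) \<union> (if 0 \<le> a then - {0<..<1} else {})"
    using quantile_le_iff by (auto simp: quantile_def)
  then show "{l \<in> space borel. quantile M l \<le> a} \<in> sets borel" by simp
qed

lemma borel_measurable_cdf[measurable]: "cdf M \<in> borel_measurable borel"
  using cdf_nondecreasing by (intro borel_measurable_mono) (simp add: mono_def)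

lemma borel_measurable_measure_lessThan[measurable]: "(\<lambda>t. measure M {..<t}) \<in> borel_measurable borel"
  by (intro borel_measurable_mono) (auto simp: mono_def intro!: finite_measure_mono)

end

section \<open>Densities bounded by 1/\<lambda>\<close>

lemma is_density_integrable:
  assumes "is_density M Z"
  shows "integrable M Z" and "integral\<^sup>L M Z = 1"
proof -
  have Z: "Z \<in> borel_measurable M" "\<And>x. x \<in> space M \<Longrightarrow> 0 \<le> Z x" "(\<integral>\<^sup>+ x. Z x \<partial>M) = 1"
    using assms unfolding is_density_def by auto
  then show "integrable M Z" by (intro integrableI_nonneg) (auto intro: AE_I2)
  with Z have "ennreal (integral\<^sup>L M Z) = 1"
    by (simp add: nn_integral_eq_integral[symmetric] AE_I2)
  then show "integral\<^sup>L M Z = 1"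
    using Z(2) by (metis ennreal_1 ennreal_inj integral_nonneg_AE AE_I2 zero_le_one)
qed

lemma D_lamD:
  assumes "Z \<in> D_lam M l"
  shows "Z \<in> borel_measurable M" "\<And>x. x \<in> space M \<Longrightarrow> 0 \<le> Z x" "AE x in M. Z x \<le> 1 / l"
    "integrable M Z" "integral\<^sup>L M Z = 1"
  using assms is_density_integrable unfolding D_lam_def is_density_def by auto

lemma D_lamI:
  assumes "integrable M Z" "integral\<^sup>L M Z = 1" "\<And>x. x \<in> space M \<Longrightarrow> 0 \<le> Z x"
    "AE x in M. Z x \<le> 1 / l"
  shows "Z \<in> D_lam M l"
  using assms nn_integral_eq_integral[of M Z]
  unfolding D_lam_def is_density_def by (auto intro: AE_I2)

lemma integrable_bounded_mult:
  fixes Y :: "'a \<Rightarrow> real"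
  assumes "Q \<in> borel_measurable M" "AE x in M. \<bar>Q x\<bar> \<le> B" "integrable M Y"
  shows "integrable M (\<lambda>x. Q x * Y x)"
proof (rule Bochner_Integration.integrable_bound[where f="\<lambda>x. B * Y x"])
  show "AE x in M. norm (Q x * Y x) \<le> norm (B * Y x)"
    using assms(2) by eventually_elim (auto simp: abs_mult intro!: mult_right_mono)
qed (use assms in auto)

lemma integrable_D_lam_mult:
  fixes Y :: "'a \<Rightarrow> real"
  assumes Z: "Z \<in> D_lam M l" and "integrable M Y"
  shows "integrable M (\<lambda>x. Z x * Y x)"
  using D_lamD(3)[OF Z] AE_space D_lamD(2)[OF Z]
  by (intro integrable_bounded_mult[OF D_lamD(1)[OF Z] _ assms(2)]) (auto elim!: eventually_mono)

lemma expQ_D_lam: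
  assumes "Z \<in> D_lam M l" "integrable M Y"
  shows "expQ M Z Y = ereal (\<integral>x. Z x * Y x \<partial>M)"
  unfolding expQ_def using ext_int_eq_integral[OF integrable_D_lam_mult[OF assms]] .

lemma u_lam_le_expQ: "Z \<in> D_lam M l \<Longrightarrow> u_lam M l Y \<le> expQ M Z Y"
  unfolding u_lam_def by (rule INF_lower)

lemma u_lam_le_integral:
  assumes "Z \<in> D_lam M l" "integrable M Y"
  shows "u_lam M l Y \<le> ereal (\<integral>x. Z x * Y x \<partial>M)"
  using u_lam_le_expQ[OF assms(1), of Y] expQ_D_lam[OF assms] by simp

lemma D_lam_antimono: "0 < l \<Longrightarrow> l \<le> l' \<Longrightarrow> D_lam M l' \<subseteq> D_lam M l"
  unfolding D_lam_def by (auto elim!: eventually_mono intro: order_trans[OF _ divide_left_mono])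

lemma u_lam_mono: "0 < l \<Longrightarrow> l \<le> l' \<Longrightarrow> u_lam M l Y \<le> u_lam M l' Y"
  unfolding u_lam_def by (rule INF_superset_mono[OF D_lam_antimono]) auto

lemma u_lam_superadditive:
  assumes "0 < l" "integrable M X" "integrable M W"
  shows "u_lam M l X + u_lam M l W \<le> u_lam M l (\<lambda>x. X x + W x)"
  unfolding u_lam_def[of M l "\<lambda>x. X x + W x"]
proof (rule INF_greatest)
  fix Z assume Z: "Z \<in> D_lam M l"
  have "expQ M Z (\<lambda>x. X x + W x) = expQ M Z X + expQ M Z W"
    using assms integrable_D_lam_mult[OF Z] by (simp add: expQ_D_lam[OF Z] distrib_left)
  then show "u_lam M l X + u_lam M l W \<le> expQ M Z (\<lambda>x. X x + W x)"
    by (simp add: add_mono u_lam_le_expQ[OF Z])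
qed

lemma integral_pos_if_not_AE_zero:
  fixes f :: "'a \<Rightarrow> real"
  assumes "integrable M f" "AE x in M. 0 \<le> f x" "\<not> (AE x in M. f x = 0)"
  shows "0 < integral\<^sup>L M f"
  using integral_nonneg_AE[OF assms(2)] integral_nonneg_eq_0_iff_AE[OF assms(1,2)] assms(3)
  by linarith

lemma u_lam_eq_integral_if_saturated:
  fixes Y :: "'a \<Rightarrow> real"
  assumes Z: "Z \<in> D_lam M l" and l: "0 < l" and Y: "integrable M Y"
    and below: "AE x in M. Y x < k \<longrightarrow> Z x = 1 / l"
    and above: "AE x in M. k < Y x \<longrightarrow> Z x = 0"
  shows "u_lam M l Y = ereal (\<integral>x. Z x * Y x \<partial>M)"
proof (rule antisym)
  show "u_lam M l Y \<le> ereal (\<integral>x. Z x * Y x \<partial>M)" by (rule u_lam_le_integral[OF Z Y])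
  show "ereal (\<integral>x. Z x * Y x \<partial>M) \<le> u_lam M l Y"
    unfolding u_lam_def
  proof (rule INF_greatest)
    fix Q assume Q: "Q \<in> D_lam M l"
    have "AE x in M. 0 \<le> (Q x - Z x) * (Y x - k)"
      using below above D_lamD(3)[OF Q] AE_space
    proof eventually_elim
      case (elim x)
      then show ?case
        using D_lamD(2)[OF Q elim(4)] by (cases "Y x" k rule: linorder_cases)
          (auto intro: mult_nonpos_nonpos mult_nonneg_nonneg)
    qed
    then have "0 \<le> (\<integral>x. (Q x * Y x - Z x * Y x) - k * (Q x - Z x) \<partial>M)"
      by (auto simp: algebra_simps intro: integral_nonneg_AE elim!: eventually_mono)
    also have "\<dots> = (\<integral>x. Q x * Y x \<partial>M) - (\<integral>x. Z x * Y x \<partial>M)"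
      using integrable_D_lam_mult[OF Q Y] integrable_D_lam_mult[OF Z Y] D_lamD(4,5)[OF Q]
        D_lamD(4,5)[OF Z] by simp
    finally show "ereal (\<integral>x. Z x * Y x \<partial>M) \<le> expQ M Q Y"
      using expQ_D_lam[OF Q Y] by simp
  qed
qed

lemma D_lam_transfer:
  assumes Z: "Z \<in> D_lam M l"
    and f: "integrable M f" "\<And>x. x \<in> space M \<Longrightarrow> 0 \<le> f x" "AE x in M. Z x + f x \<le> 1 / l"
    and g: "integrable M g" "\<And>x. x \<in> space M \<Longrightarrow> 0 \<le> g x \<and> g x \<le> Z x"
    and same_mass: "integral\<^sup>L M f = integral\<^sup>L M g"
  shows "(\<lambda>x. Z x + f x - g x) \<in> D_lam M l"
proof (rule D_lamI)
  show "integrable M (\<lambda>x. Z x + f x - g x)" using D_lamD(4)[OF Z] f(1) g(1) by simp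
  then show "(\<integral>x. Z x + f x - g x \<partial>M) = 1" using D_lamD(4,5)[OF Z] f(1) g(1) same_mass by simp
  show "0 \<le> Z x + f x - g x" if "x \<in> space M" for x using f(2)[OF that] g(2)[OF that] by simp
  show "AE x in M. Z x + f x - g x \<le> 1 / l"
    using f(3) AE_space by eventually_elim (use g(2) in fastforce)
qed

context prob_space
begin

lemma one_in_D_lam: "0 < l \<Longrightarrow> l \<le> 1 \<Longrightarrow> (\<lambda>_. 1) \<in> D_lam M l"
  by (rule D_lamI) (auto simp: prob_space)

lemma u_lam_le_expectation:
  "0 < l \<Longrightarrow> l \<le> 1 \<Longrightarrow> integrable M Y \<Longrightarrow> u_lam M l Y \<le> ereal (expectation Y)"
  using u_lam_le_integral[OF one_in_D_lam] by simp

lemma u_lam_finite: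
  fixes Y :: "'a \<Rightarrow> real"
  assumes l: "0 < l" "l \<le> 1" and Y: "integrable M Y"
  shows "\<bar>u_lam M l Y\<bar> \<noteq> \<infinity>"
proof -
  have "ereal (- (\<integral>x. \<bar>Y x\<bar> \<partial>M) / l) \<le> u_lam M l Y"
    unfolding u_lam_def
  proof (rule INF_greatest)
    fix Z assume Z: "Z \<in> D_lam M l"
    have "AE x in M. - (1 / l) * \<bar>Y x\<bar> \<le> Z x * Y x"
      using D_lamD(3)[OF Z] AE_space
    proof eventually_elim
      case (elim x)
      have "Z x * \<bar>Y x\<bar> \<le> (1 / l) * \<bar>Y x\<bar>" using elim by (intro mult_right_mono) auto
      moreover have "- (Z x * \<bar>Y x\<bar>) \<le> Z x * Y x"
        using mult_left_mono[of "- \<bar>Y x\<bar>" "Y x" "Z x"] D_lamD(2)[OF Z elim(2)] by simp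
      ultimately show ?case by linarith
    qed
    then have "(\<integral>x. - (1 / l) * \<bar>Y x\<bar> \<partial>M) \<le> (\<integral>x. Z x * Y x \<partial>M)"
      using Y integrable_D_lam_mult[OF Z Y] by (intro integral_mono_AE) auto
    then show "ereal (- (\<integral>x. \<bar>Y x\<bar> \<partial>M) / l) \<le> expQ M Z Y"
      using expQ_D_lam[OF Z Y] by simp
  qed
  then show ?thesis using u_lam_le_expectation[OF l Y] by auto
qed

lemma u_lam_one:
  assumes Y: "integrable M Y"
  shows "u_lam M 1 Y = ereal (expectation Y)"
proof (rule antisym)
  show "u_lam M 1 Y \<le> ereal (expectation Y)" by (rule u_lam_le_expectation[OF _ _ Y]) auto
  show "ereal (expectation Y) \<le> u_lam M 1 Y" unfolding u_lam_def
  proof (rule INF_greatest)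
    fix Q assume Q: "Q \<in> D_lam M 1"
    have "AE x in M. 1 - Q x = 0"
      using D_lamD[OF Q] by (subst integral_nonneg_eq_0_iff_AE[symmetric])
        (auto simp: prob_space elim: eventually_mono)
    then have "(\<integral>x. Q x * Y x \<partial>M) = expectation Y"
      using D_lamD(1)[OF Q] Y by (intro integral_cong_AE) (auto elim: eventually_mono)
    then show "ereal (expectation Y) \<le> expQ M Q Y" using expQ_D_lam[OF Q Y] by simp
  qed
qed

lemma integral_indicator_scaled:
  assumes "A \<in> sets M"
  shows "integrable M (\<lambda>x. c * indicator A x :: real)" "(\<integral>x. c * indicator A x \<partial>M) = c * measure M A"
  using assms sets.sets_into_space[OF assms] by (auto simp: less_top[symmetric] Int_absorb2)

lemma measure_le_if_D_lam_saturated: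
  assumes Z: "Z \<in> D_lam M l" and l: "0 < l" and A: "A \<in> sets M"
    and sat: "AE x in M. x \<in> A \<longrightarrow> Z x = 1 / l"
  shows "measure M A \<le> l"
proof -
  have "AE x in M. (1 / l) * indicator A x \<le> Z x"
    using sat AE_space by eventually_elim (auto simp: indicator_def D_lamD(2)[OF Z])
  then have "(\<integral>x. (1 / l) * indicator A x \<partial>M) \<le> integral\<^sup>L M Z"
    using integral_indicator_scaled(1)[OF A] D_lamD(4)[OF Z] by (intro integral_mono_AE) auto
  then have "(1 / l) * measure M A \<le> 1" unfolding integral_indicator_scaled(2)[OF A] D_lamD(5)[OF Z] .
  then show ?thesis using l by (simp add: field_simps)
qed

lemma measure_ge_if_D_lam_concentrated:
  assumes Z: "Z \<in> D_lam M l" and l: "0 < l" and A: "A \<in> sets M"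
    and conc: "AE x in M. x \<notin> A \<longrightarrow> Z x = 0"
  shows "l \<le> measure M A"
proof -
  have "AE x in M. Z x \<le> (1 / l) * indicator A x"
    using conc D_lamD(3)[OF Z] by eventually_elim (auto simp: indicator_def)
  then have "integral\<^sup>L M Z \<le> (\<integral>x. (1 / l) * indicator A x \<partial>M)"
    using integral_indicator_scaled(1)[OF A] D_lamD(4)[OF Z] by (intro integral_mono_AE) auto
  then have "1 \<le> (1 / l) * measure M A" unfolding integral_indicator_scaled(2)[OF A] D_lamD(5)[OF Z] .
  then show ?thesis using l by (simp add: field_simps)
qed

lemma D_lam_raise_on:
  assumes Z: "Z \<in> D_lam M l" and l: "0 < l" and N: "N \<in> sets M" "l < measure M N"
  obtains Q where "Q \<in> D_lam M l" "\<And>x. x \<notin> N \<Longrightarrow> Q x = 0" "AE x in M. x \<in> N \<longrightarrow> Z x \<le> Q x"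
proof -
  note Z_props = D_lamD[OF Z]
  define m where "m = (\<integral>x. Z x * indicator N x \<partial>M)"
  have int_ZN: "integrable M (\<lambda>x. Z x * indicator N x)"
    using Z_props(4) N(1) by (rule integrable_real_mult_indicator[rotated])
  have "0 \<le> m" unfolding m_def by (intro integral_nonneg_AE AE_I2) (simp add: Z_props(2))
  have "m \<le> integral\<^sup>L M Z"
    unfolding m_def using int_ZN Z_props(2,4) by (intro integral_mono) (auto simp: indicator_def)
  then have "m \<le> 1" using Z_props(5) by simp
  txt \<open>
    Q interpolates between Z and the maximal weight 1/\<lambda> on N; since P(N) > \<lambda>, the
    interpolation parameter \<theta> can be chosen so that Q has total mass 1.
  \<close>
  define d where "d = measure M N / l - m"
  have "1 < measure M N / l" using N(2) l by (simp add: field_simps)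
  then have "0 < d" "1 - m \<le> d" using \<open>m \<le> 1\<close> by (auto simp: d_def)
  define \<theta> where "\<theta> = (1 - m) / d"
  have \<theta>: "0 \<le> \<theta>" "\<theta> \<le> 1" "m + \<theta> * d = 1"
    using \<open>0 < d\<close> \<open>1 - m \<le> d\<close> \<open>m \<le> 1\<close> by (auto simp: \<theta>_def)
  define Q where "Q = (\<lambda>x. ((1 - \<theta>) * Z x + \<theta> / l) * indicator N x)"
  have Q_D_lam: "Q \<in> D_lam M l"
  proof (rule D_lamI)
    show "integrable M Q"
      using int_ZN integral_indicator_scaled[OF N(1), of "\<theta> / l"] by (simp add: Q_def algebra_simps)
    have "integral\<^sup>L M Q = (1 - \<theta>) * m + (\<theta> / l) * measure M N"
      using int_ZN integral_indicator_scaled[OF N(1), of "\<theta> / l"]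
      by (simp add: Q_def m_def algebra_simps)
    then show "integral\<^sup>L M Q = 1" using \<theta>(3) by (simp add: d_def algebra_simps)
    show "0 \<le> Q x" if "x \<in> space M" for x
      using Z_props(2)[OF that] \<theta> l by (simp add: Q_def)
    show "AE x in M. Q x \<le> 1 / l"
      using Z_props(3)
    proof eventually_elim
      case (elim x)
      have "(1 - \<theta>) * Z x + \<theta> / l \<le> (1 - \<theta>) * (1 / l) + \<theta> / l"
        using elim \<theta> by (intro add_right_mono mult_left_mono) auto
      also have "\<dots> = 1 / l" using l by (simp add: field_simps)
      finally show ?case using l by (auto simp: Q_def indicator_def)
    qed
  qed
  have Q_ge: "AE x in M. x \<in> N \<longrightarrow> Z x \<le> Q x"
    using Z_props(3)
  proof eventually_elim
    case (elim x)
    have "\<theta> * Z x \<le> \<theta> * (1 / l)" using elim \<theta> by (intro mult_left_mono) auto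
    then show ?case by (auto simp: Q_def algebra_simps)
  qed
  show ?thesis by (rule that[OF Q_D_lam _ Q_ge]) (simp add: Q_def)
qed

lemma u_lam_le_neg_part:
  fixes Y :: "'a \<Rightarrow> real"
  assumes Z: "Z \<in> D_lam M l" and l: "0 < l" and [measurable]: "Y \<in> borel_measurable M"
    and below: "l < measure M {x \<in> space M. Y x < 0}"
  shows "u_lam M l Y \<le> - enn2ereal (\<integral>\<^sup>+ x. ennreal (- (Z x * Y x)) \<partial>M)"
proof -
  note Z_props = D_lamD[OF Z]
  obtain Q where Q: "Q \<in> D_lam M l" "\<And>x. x \<notin> {x \<in> space M. Y x < 0} \<Longrightarrow> Q x = 0"
    "AE x in M. x \<in> {x \<in> space M. Y x < 0} \<longrightarrow> Z x \<le> Q x"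
    using D_lam_raise_on[OF Z l _ below] by auto
  have "u_lam M l Y \<le> expQ M Q Y" by (rule u_lam_le_expQ[OF Q(1)])
  also have "expQ M Q Y = - enn2ereal (\<integral>\<^sup>+ x. ennreal (- (Q x * Y x)) \<partial>M)"
  proof -
    have "AE x in M. ennreal (Q x * Y x) = 0"
    proof (rule AE_I2)
      fix x assume x: "x \<in> space M"
      show "ennreal (Q x * Y x) = 0"
      proof (cases "Y x < 0")
        case True
        then show ?thesis using D_lamD(2)[OF Q(1) x] by (simp add: ennreal_neg mult_nonneg_nonpos)
      qed (use Q(2)[of x] x in simp)
    qed
    then have "(\<integral>\<^sup>+ x. ennreal (Q x * Y x) \<partial>M) = 0" by (simp add: nn_integral_cong_AE)
    then show ?thesis unfolding expQ_def ext_int_ereal by (simp add: zero_ennreal.rep_eq)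
  qed
  also have "\<dots> \<le> - enn2ereal (\<integral>\<^sup>+ x. ennreal (- (Z x * Y x)) \<partial>M)"
  proof -
    have "AE x in M. ennreal (- (Z x * Y x)) \<le> ennreal (- (Q x * Y x))"
      using Q(3) AE_space
    proof eventually_elim
      case (elim x)
      then show ?case
        using Z_props(2)[OF elim(2)]
        by (cases "Y x < 0") (auto intro!: ennreal_leI mult_right_mono_neg simp: ennreal_neg)
    qed
    then have "(\<integral>\<^sup>+ x. ennreal (- (Z x * Y x)) \<partial>M) \<le> (\<integral>\<^sup>+ x. ennreal (- (Q x * Y x)) \<partial>M)"
      by (rule nn_integral_mono_AE)
    then show ?thesis by (simp add: less_eq_ennreal.rep_eq[symmetric])
  qed
  finally show ?thesis .
qed

lemma u_lam_eq_MInf_if_neg_part_infinite: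
  assumes "(\<integral>\<^sup>+ x. ennreal (- Y x) \<partial>M) = \<infinity>" "0 < l" "l \<le> 1"
  shows "u_lam M l Y = -\<infinity>"
proof -
  have "u_lam M l Y \<le> expQ M (\<lambda>_. 1) Y" using assms by (intro u_lam_le_expQ one_in_D_lam)
  also have "\<dots> = -\<infinity>" unfolding expQ_def ext_int_ereal using assms(1) by simp
  finally show ?thesis by simp
qed

lemma nn_integral_D_lam_neg_le:
  fixes Y :: "'a \<Rightarrow> real"
  assumes Z: "Z \<in> D_lam M l" and p: "0 < p" "p \<le> l" and [measurable]: "Y \<in> borel_measurable M"
  shows "(\<integral>\<^sup>+ x. ennreal (- (Z x * Y x)) \<partial>M) \<le> ennreal (1 / p) * (\<integral>\<^sup>+ x. ennreal (- Y x) \<partial>M)"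
proof -
  have "AE x in M. ennreal (- (Z x * Y x)) \<le> ennreal (1 / p) * ennreal (- Y x)"
    using D_lamD(3)[OF Z] AE_space
  proof eventually_elim
    case (elim x)
    have "1 / l \<le> 1 / p" using p by (intro divide_left_mono) auto
    with elim(1) have Zp: "Z x \<le> 1 / p" by linarith
    show ?case
    proof (cases "0 \<le> - Y x")
      case True
      then have "ennreal (- (Z x * Y x)) \<le> ennreal (1 / p * - Y x)"
        using mult_right_mono[OF Zp True] by (intro ennreal_leI) simp
      also have "\<dots> = ennreal (1 / p) * ennreal (- Y x)"
        using True p by (intro ennreal_mult) auto
      finally show ?thesis .
    next
      case False
      then show ?thesis using D_lamD(2)[OF Z elim(2)] by (simp add: ennreal_neg mult_nonneg_nonpos)
    qed
  qed
  then show ?thesis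
    using D_lamD(1)[OF Z] by (subst nn_integral_cmult[symmetric]) (auto intro: nn_integral_mono_AE)
qed

lemma u_lam_less_if_transfer:
  fixes Y :: "'a \<Rightarrow> real"
  assumes Z: "Z \<in> D_lam M l" and l: "0 < l" and Y: "integrable M Y"
    and f: "f \<in> borel_measurable M" "\<And>x. x \<in> space M \<Longrightarrow> 0 \<le> f x" "AE x in M. Z x + f x \<le> 1 / l"
      "\<And>x. x \<in> space M \<Longrightarrow> 0 < f x \<Longrightarrow> Y x < c"
    and g: "g \<in> borel_measurable M" "\<And>x. x \<in> space M \<Longrightarrow> 0 \<le> g x \<and> g x \<le> Z x"
      "\<And>x. x \<in> space M \<Longrightarrow> 0 < g x \<Longrightarrow> c \<le> Y x"
    and same_mass: "integral\<^sup>L M f = integral\<^sup>L M g" and pos: "0 < integral\<^sup>L M f"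
  shows "u_lam M l Y < ereal (\<integral>x. Z x * Y x \<partial>M)"
proof -
  note Z_props = D_lamD[OF Z]
  have "AE x in M. \<bar>f x\<bar> \<le> 1 / l" "AE x in M. \<bar>g x\<bar> \<le> 1 / l"
    using f(3) Z_props(3) AE_space by (eventually_elim, use f(2) g(2) Z_props(2) in force)+
  then have int: "integrable M f" "integrable M (\<lambda>x. f x * Y x)"
    "integrable M g" "integrable M (\<lambda>x. g x * Y x)"
    using f(1) g(1) by (auto intro!: integrable_const_bound[where B="1 / l"]
        integrable_bounded_mult[OF _ _ Y])
  have "\<not> (AE x in M. f x * (c - Y x) = 0)"
  proof
    assume "AE x in M. f x * (c - Y x) = 0"
    then have "AE x in M. f x = 0"
      using AE_space by eventually_elim (use f(2,4) in force)
    then have "integral\<^sup>L M f = 0" by (simp add: integral_eq_zero_AE)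
    with pos show False by simp
  qed
  moreover have "integrable M (\<lambda>x. f x * (c - Y x))" using int by (simp add: right_diff_distrib)
  moreover have "0 \<le> f x * (c - Y x)" if "x \<in> space M" for x
    using f(2,4)[OF that] by (cases "f x = 0") auto
  ultimately have "0 < (\<integral>x. f x * (c - Y x) \<partial>M)"
    by (intro integral_pos_if_not_AE_zero) (auto intro: AE_I2)
  then have fY: "(\<integral>x. f x * Y x \<partial>M) < c * integral\<^sup>L M f"
    using int by (simp add: right_diff_distrib mult.commute)
  have "0 \<le> (\<integral>x. g x * (Y x - c) \<partial>M)"
    using g(2,3) by (intro integral_nonneg_AE AE_I2) (force intro: mult_nonneg_nonneg)
  then have gY: "c * integral\<^sup>L M g \<le> (\<integral>x. g x * Y x \<partial>M)"
    using int by (simp add: right_diff_distrib mult.commute)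
  have "(\<lambda>x. Z x + f x - g x) \<in> D_lam M l"
    by (rule D_lam_transfer[OF Z int(1) f(2,3) int(3) g(2) same_mass])
  then have "u_lam M l Y \<le> ereal (\<integral>x. (Z x + f x - g x) * Y x \<partial>M)"
    by (rule u_lam_le_integral[OF _ Y])
  also have "(\<integral>x. (Z x + f x - g x) * Y x \<partial>M)
      = (\<integral>x. Z x * Y x \<partial>M) + (\<integral>x. f x * Y x \<partial>M) - (\<integral>x. g x * Y x \<partial>M)"
    using integrable_D_lam_mult[OF Z Y] int by (simp add: algebra_simps)
  also have "\<dots> < (\<integral>x. Z x * Y x \<partial>M)" using fY gY same_mass by simp
  finally show ?thesis by simp
qed

lemma D_lam_capacity_pos:
  assumes Z: "Z \<in> D_lam M l" and l: "0 < l" and [measurable]: "Measurable.pred M P"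
    and not_sat: "\<not> (AE x in M. P x \<longrightarrow> Z x = 1 / l)"
  shows "0 < (\<integral>x. (1 / l - Z x) * indicator {x. P x \<and> Z x < 1 / l} x \<partial>M)"
proof (rule integral_pos_if_not_AE_zero)
  note Z_props = D_lamD[OF Z]
  have [measurable]: "Z \<in> borel_measurable M" by (rule Z_props(1))
  have "(\<lambda>x. (1 / l - Z x) * indicator {x. P x \<and> Z x < 1 / l} x) \<in> borel_measurable M"
    by measurable
  then show "integrable M (\<lambda>x. (1 / l - Z x) * indicator {x. P x \<and> Z x < 1 / l} x)"
    using Z_props(2) l by (intro integrable_const_bound[where B="1 / l"] AE_I2) (auto simp: indicator_def)
  show "AE x in M. 0 \<le> (1 / l - Z x) * indicator {x. P x \<and> Z x < 1 / l} x"
    by (intro AE_I2) (simp add: indicator_def)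
  show "\<not> (AE x in M. (1 / l - Z x) * indicator {x. P x \<and> Z x < 1 / l} x = 0)"
  proof
    assume "AE x in M. (1 / l - Z x) * indicator {x. P x \<and> Z x < 1 / l} x = 0"
    with Z_props(3) have "AE x in M. P x \<longrightarrow> Z x = 1 / l"
      by eventually_elim (auto simp: indicator_def)
    with not_sat show False ..
  qed
qed

lemma D_lam_mass_pos:
  assumes Z: "Z \<in> D_lam M l" and [measurable]: "Measurable.pred M P"
    and not_null: "\<not> (AE x in M. P x \<longrightarrow> Z x = 0)"
  shows "0 < (\<integral>x. Z x * indicator {x. P x} x \<partial>M)"
proof (rule integral_pos_if_not_AE_zero)
  note Z_props = D_lamD[OF Z]
  have [measurable]: "Z \<in> borel_measurable M" by (rule Z_props(1))
  have "(\<lambda>x. Z x * indicator {x. P x} x) \<in> borel_measurable M" by measurable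
  then show "integrable M (\<lambda>x. Z x * indicator {x. P x} x)"
    using Z_props(2) by (intro Bochner_Integration.integrable_bound[OF Z_props(4)] AE_I2)
      (auto simp: indicator_def)
  show "AE x in M. 0 \<le> Z x * indicator {x. P x} x"
    by (intro AE_I2) (simp add: Z_props(2))
  show "\<not> (AE x in M. Z x * indicator {x. P x} x = 0)"
  proof
    assume "AE x in M. Z x * indicator {x. P x} x = 0"
    then have "AE x in M. P x \<longrightarrow> Z x = 0" by eventually_elim (auto simp: indicator_def)
    with not_null show False ..
  qed
qed

lemma minimizer_dichotomy:
  fixes Y :: "'a \<Rightarrow> real"
  assumes Z: "Z \<in> D_lam M l" and l: "0 < l" and Y: "integrable M Y"
    and opt: "u_lam M l Y = ereal (\<integral>x. Z x * Y x \<partial>M)"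
  shows "(AE x in M. Y x < c \<longrightarrow> Z x = 1 / l) \<or> (AE x in M. c < Y x \<longrightarrow> Z x = 0)"
proof (rule ccontr)
  txt \<open>Otherwise moving mass from {c < Y} into the free capacity on {Y < c} lowers E_Z Y.\<close>
  assume "\<not> ?thesis"
  then have not_sat: "\<not> (AE x in M. Y x < c \<longrightarrow> Z x = 1 / l)"
    and not_null: "\<not> (AE x in M. c < Y x \<longrightarrow> Z x = 0)" by auto
  note Z_props = D_lamD[OF Z]
  have [measurable]: "Z \<in> borel_measurable M" "Y \<in> borel_measurable M" using Z_props(1) Y by auto
  define f where "f x = (1 / l - Z x) * indicator {x. Y x < c \<and> Z x < 1 / l} x" for x
  define g where "g x = Z x * indicator {x. c < Y x} x" for x
  have f_pos: "0 < integral\<^sup>L M f"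
    unfolding f_def by (rule D_lam_capacity_pos[OF Z l _ not_sat]) measurable
  have g_pos: "0 < integral\<^sup>L M g"
    unfolding g_def by (rule D_lam_mass_pos[OF Z _ not_null]) measurable
  have f_bounds: "0 \<le> f x" "f x \<le> 1 / l" if "x \<in> space M" for x
    using Z_props(2)[OF that] l by (auto simp: f_def indicator_def)
  have g_bounds: "0 \<le> g x" "g x \<le> Z x" if "x \<in> space M" for x
    using Z_props(2)[OF that] by (auto simp: g_def indicator_def)
  define s where "s = min (integral\<^sup>L M f) (integral\<^sup>L M g)"
  define a where "a = s / integral\<^sup>L M f"
  define b where "b = s / integral\<^sup>L M g"
  have ab: "0 < a" "a \<le> 1" "0 < b" "b \<le> 1"
    using f_pos g_pos by (auto simp: a_def b_def s_def)
  have "u_lam M l Y < ereal (\<integral>x. Z x * Y x \<partial>M)"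
  proof (rule u_lam_less_if_transfer[OF Z l Y, where f="\<lambda>x. a * f x" and g="\<lambda>x. b * g x" and c=c])
    show "AE x in M. Z x + a * f x \<le> 1 / l"
      using Z_props(3)
    proof eventually_elim
      case (elim x)
      then have "a * (1 / l - Z x) \<le> 1 / l - Z x"
        using ab mult_left_le_one_le[of "1 / l - Z x" a] by simp
      with elim show ?case by (auto simp: f_def indicator_def)
    qed
    show "0 \<le> b * g x \<and> b * g x \<le> Z x" if "x \<in> space M" for x
      using g_bounds[OF that] ab mult_left_le_one_le[of "g x" b] by auto
    show "integral\<^sup>L M (\<lambda>x. a * f x) = integral\<^sup>L M (\<lambda>x. b * g x)"
      using f_pos g_pos by (simp add: a_def b_def)
    show "0 < integral\<^sup>L M (\<lambda>x. a * f x)" using f_pos ab by simp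
  qed (use f_bounds g_bounds ab in \<open>auto simp: f_def g_def indicator_def of_bool_def zero_less_mult_iff split: if_splits\<close>)
  with opt show False by simp
qed

lemma not_AE_not_if_measure_pos:
  assumes "{x \<in> space M. P x} \<in> sets M" "0 < measure M {x \<in> space M. P x}"
  shows "\<not> (AE x in M. \<not> P x)"
  using prob_Collect_eq_0[OF assms(1)] assms(2) by simp

lemma no_common_minimizer:
  fixes X W :: "'a \<Rightarrow> real"
  assumes Z: "Z \<in> D_lam M l" and l: "0 < l"
    and [measurable]: "X \<in> borel_measurable M" "W \<in> borel_measurable M"
    and dichotomy_X: "\<And>c. (AE \<omega> in M. X \<omega> < c \<longrightarrow> Z \<omega> = 1 / l) \<or> (AE \<omega> in M. c < X \<omega> \<longrightarrow> Z \<omega> = 0)"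
    and dichotomy_W: "\<And>c. (AE \<omega> in M. W \<omega> < c \<longrightarrow> Z \<omega> = 1 / l) \<or> (AE \<omega> in M. c < W \<omega> \<longrightarrow> Z \<omega> = 0)"
    and "x < x'" "w' < w"
    and pos_A: "0 < measure M {\<omega> \<in> space M. X \<omega> < x \<and> w < W \<omega>}"
    and pos_B: "0 < measure M {\<omega> \<in> space M. x' < X \<omega> \<and> W \<omega> < w'}"
    and lower: "measure M {\<omega> \<in> space M. X \<omega> \<le> x \<and> W \<omega> \<le> w'} < l"
    and upper: "l < measure M {\<omega> \<in> space M. W \<omega> < w \<or> X \<omega> < x'}"
  shows False
proof -
  have A: "\<not> (AE \<omega> in M. \<not> (X \<omega> < x \<and> w < W \<omega>))"
    using pos_A by (intro not_AE_not_if_measure_pos) auto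
  have B: "\<not> (AE \<omega> in M. \<not> (x' < X \<omega> \<and> W \<omega> < w'))"
    using pos_B by (intro not_AE_not_if_measure_pos) auto
  show False
  proof (cases "AE \<omega> in M. X \<omega> < x \<and> w < W \<omega> \<longrightarrow> Z \<omega> = 1 / l")
    case True
    have "\<not> (AE \<omega> in M. w < W \<omega> \<longrightarrow> Z \<omega> = 0)"
    proof
      assume "AE \<omega> in M. w < W \<omega> \<longrightarrow> Z \<omega> = 0"
      with True have "AE \<omega> in M. \<not> (X \<omega> < x \<and> w < W \<omega>)" by eventually_elim (use l in auto)
      with A show False ..
    qed
    then have W_sat: "AE \<omega> in M. W \<omega> < w \<longrightarrow> Z \<omega> = 1 / l" using dichotomy_W by blast
    have "\<not> (AE \<omega> in M. x' < X \<omega> \<longrightarrow> Z \<omega> = 0)"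
    proof
      assume "AE \<omega> in M. x' < X \<omega> \<longrightarrow> Z \<omega> = 0"
      with W_sat have "AE \<omega> in M. \<not> (x' < X \<omega> \<and> W \<omega> < w')"
        by eventually_elim (use l \<open>w' < w\<close> in auto)
      with B show False ..
    qed
    then have "AE \<omega> in M. X \<omega> < x' \<longrightarrow> Z \<omega> = 1 / l" using dichotomy_X by blast
    with W_sat have "AE \<omega> in M. \<omega> \<in> {\<omega> \<in> space M. W \<omega> < w \<or> X \<omega> < x'} \<longrightarrow> Z \<omega> = 1 / l"
      by eventually_elim auto
    then have "measure M {\<omega> \<in> space M. W \<omega> < w \<or> X \<omega> < x'} \<le> l"
      by (intro measure_le_if_D_lam_saturated[OF Z l]) auto
    with upper show False by simp
  next
    case False
    then have "\<not> (AE \<omega> in M. X \<omega> < x \<longrightarrow> Z \<omega> = 1 / l)"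
      by (rule contrapos_nn) (auto elim: eventually_mono)
    then have X_null: "AE \<omega> in M. x < X \<omega> \<longrightarrow> Z \<omega> = 0" using dichotomy_X by blast
    have "\<not> (AE \<omega> in M. W \<omega> < w' \<longrightarrow> Z \<omega> = 1 / l)"
    proof
      assume "AE \<omega> in M. W \<omega> < w' \<longrightarrow> Z \<omega> = 1 / l"
      with X_null have "AE \<omega> in M. \<not> (x' < X \<omega> \<and> W \<omega> < w')"
        by eventually_elim (use l \<open>x < x'\<close> in auto)
      with B show False ..
    qed
    then have "AE \<omega> in M. w' < W \<omega> \<longrightarrow> Z \<omega> = 0" using dichotomy_W by blast
    with X_null have "AE \<omega> in M. \<omega> \<notin> {\<omega> \<in> space M. X \<omega> \<le> x \<and> W \<omega> \<le> w'} \<longrightarrow> Z \<omega> = 0"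
      using AE_space by eventually_elim auto
    then have "l \<le> measure M {\<omega> \<in> space M. X \<omega> \<le> x \<and> W \<omega> \<le> w'}"
      by (intro measure_ge_if_D_lam_concentrated[OF Z l]) auto
    with lower show False by simp
  qed
qed

end

section \<open>Tail densities\<close>

text \<open>
  The fraction (\<lambda> - P(S < q)) / P(S = q) of the atom at the quantile q that is needed to bring
  the mass of the lower tail up to exactly \<lambda>.
\<close>

definition atom_weight :: "real measure \<Rightarrow> real \<Rightarrow> real" where
  "atom_weight N l = (if cdf N (quantile N l) = measure N {..<quantile N l} then 0
     else (l - measure N {..<quantile N l}) / (cdf N (quantile N l) - measure N {..<quantile N l}))"

definition tail_density :: "'a measure \<Rightarrow> ('a \<Rightarrow> real) \<Rightarrow> real \<Rightarrow> 'a \<Rightarrow> real" where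
  "tail_density M S l x = (if 0 < l \<and> l < 1 then
     (if S x < quantile (distr M borel S) l then 1
      else if S x = quantile (distr M borel S) l then atom_weight (distr M borel S) l else 0) / l
   else 1)"

lemma (in real_distribution) atom_weight_bounds:
  assumes "0 < l" "l < 1"
  shows "0 \<le> atom_weight M l" "atom_weight M l \<le> 1"
  using measure_lessThan_quantile[OF assms] quantile_le_iff[OF assms, of "quantile M l"]
    finite_measure_mono[of "{..<quantile M l}" "{..quantile M l}"]
  by (auto simp: atom_weight_def cdf_def divide_le_eq_1)

context prob_space
begin

lemma tail_density_bounds:
  assumes [measurable]: "S \<in> borel_measurable M" and l: "0 < l" "l \<le> 1"
  shows "0 \<le> tail_density M S l x" "tail_density M S l x \<le> 1 / l"
  using real_distribution.atom_weight_bounds[of "distr M borel S" l] l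
  by (auto simp: tail_density_def divide_right_mono)

lemma borel_measurable_tail_density[measurable]:
  assumes [measurable]: "S \<in> borel_measurable M"
  shows "(\<lambda>(l, x). tail_density M S l x) \<in> borel_measurable (borel \<Otimes>\<^sub>M M)"
proof -
  have N: "real_distribution (distr M borel S)" by simp
  note [measurable] = real_distribution.borel_measurable_quantile[OF N]
    real_distribution.borel_measurable_cdf[OF N]
    real_distribution.borel_measurable_measure_lessThan[OF N]
  show ?thesis unfolding tail_density_def atom_weight_def case_prod_beta by measurable
qed

lemma measure_distr_borel:
  assumes [measurable]: "S \<in> borel_measurable M" and "A \<in> sets borel"
  shows "measure (distr M borel S) A = measure M {x \<in> space M. S x \<in> A}"
  using assms(2) by (subst measure_distr) (auto simp: vimage_def Int_def conj_commute)

lemma quantile_distr_bounds: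
  assumes [measurable]: "S \<in> borel_measurable M" and l: "0 < l" "l < 1"
  shows "l \<le> measure M {x \<in> space M. S x \<le> quantile (distr M borel S) l}"
    and "measure M {x \<in> space M. S x < quantile (distr M borel S) l} \<le> l"
proof -
  interpret N: real_distribution "distr M borel S" by simp
  show "l \<le> measure M {x \<in> space M. S x \<le> quantile (distr M borel S) l}"
    and "measure M {x \<in> space M. S x < quantile (distr M borel S) l} \<le> l"
    using N.quantile_le_iff[OF l, of "quantile (distr M borel S) l"] N.measure_lessThan_quantile[OF l]
    by (auto simp: cdf_def measure_distr_borel)
qed

lemma tail_mass:
  assumes [measurable]: "S \<in> borel_measurable M" and l: "0 < l" "l < 1"
  defines "q \<equiv> quantile (distr M borel S) l"
  shows "measure M {x \<in> space M. S x < q}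
      + atom_weight (distr M borel S) l * measure M {x \<in> space M. S x = q} = l"
proof -
  interpret N: real_distribution "distr M borel S" by simp
  have "measure M {x \<in> space M. S x \<le> q}
      = measure M {x \<in> space M. S x < q} + measure M {x \<in> space M. S x = q}"
    by (subst finite_measure_Union[symmetric]) (auto intro!: arg_cong[where f="measure M"])
  then show ?thesis
    using N.measure_lessThan_quantile[OF l] N.quantile_le_iff[OF l, of q]
    by (auto simp: atom_weight_def q_def cdf_def measure_distr_borel field_simps)
qed

lemma tail_density_in_D_lam:
  assumes [measurable]: "S \<in> borel_measurable M" and l: "0 < l" "l \<le> 1"
  shows "tail_density M S l \<in> D_lam M l"
proof (cases "l = 1")
  case True
  then have "tail_density M S l = (\<lambda>_. 1)" by (simp add: tail_density_def fun_eq_iff)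
  then show ?thesis using one_in_D_lam l by simp
next
  case False
  with l have l1: "l < 1" by simp
  define q where "q = quantile (distr M borel S) l"
  define a where "a = atom_weight (distr M borel S) l"
  have Z: "tail_density M S l x = (1 / l) * indicator {x \<in> space M. S x < q} x
      + (a / l) * indicator {x \<in> space M. S x = q} x" if "x \<in> space M" for x
    using that l l1 by (auto simp: tail_density_def q_def a_def indicator_def)
  have "{x \<in> space M. S x < q} \<in> sets M" "{x \<in> space M. S x = q} \<in> sets M" by measurable
  note below = integral_indicator_scaled[OF this(1), of "1 / l"]
    and atom = integral_indicator_scaled[OF this(2), of "a / l"]
  have "integral\<^sup>L M (tail_density M S l)
      = (\<integral>x. (1 / l) * indicator {x \<in> space M. S x < q} x
          + (a / l) * indicator {x \<in> space M. S x = q} x \<partial>M)"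
    by (rule Bochner_Integration.integral_cong[OF refl Z])
  also have "\<dots> = (1 / l) * measure M {x \<in> space M. S x < q} + (a / l) * measure M {x \<in> space M. S x = q}"
    by (simp only: Bochner_Integration.integral_add[OF below(1) atom(1)] below(2) atom(2))
  also have "\<dots> = 1"
  proof -
    have "measure M {x \<in> space M. S x < q} + a * measure M {x \<in> space M. S x = q} = l"
      unfolding q_def a_def by (rule tail_mass[OF assms(1) l(1) l1])
    then show ?thesis using l by (simp add: field_simps)
  qed
  finally have "integral\<^sup>L M (tail_density M S l) = 1" .
  then show ?thesis
    using tail_density_bounds[OF _ l] by (intro D_lamI integrable_const_bound[where B="1 / l"] AE_I2) auto
qed

lemma u_lam_eq_tail_density:
  fixes S :: "'a \<Rightarrow> real"
  assumes S: "integrable M S" and l: "0 < l" "l < 1"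
  shows "u_lam M l S = ereal (\<integral>x. tail_density M S l x * S x \<partial>M)"
  using l borel_measurable_integrable[OF S]
  by (intro u_lam_eq_integral_if_saturated[OF tail_density_in_D_lam _ S,
        where k="quantile (distr M borel S) l"]) (auto simp: tail_density_def)

end

section \<open>Comonotonicity\<close>

lemma comonotone_sym: "comonotone M X W \<Longrightarrow> comonotone M W X"
  unfolding comonotone_def by (auto elim!: eventually_mono simp: mult.commute)

lemma rat_pair_between:
  fixes x y :: real
  assumes "x < y"
  obtains a b :: rat where "x < real_of_rat a" "a < b" "real_of_rat b < y"
proof -
  obtain a where a: "x < real_of_rat a" "real_of_rat a < y" using of_rat_dense assms by blast
  obtain b where b: "real_of_rat a < real_of_rat b" "real_of_rat b < y" using of_rat_dense a(2) by blast
  from a b show ?thesis by (intro that[of a b]) (simp_all add: of_rat_less)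
qed

context prob_space
begin

lemma AE_threshold:
  fixes X :: "'a \<Rightarrow> real"
  assumes [measurable]: "A \<in> sets M" "B \<in> sets M" "X \<in> borel_measurable M"
    and pos: "0 < measure M A" "0 < measure M B"
    and ordered: "AE p in M \<Otimes>\<^sub>M M. fst p \<in> B \<longrightarrow> snd p \<in> A \<longrightarrow> X (snd p) \<le> X (fst p)"
  shows "\<exists>k. (AE x in M. x \<in> A \<longrightarrow> X x \<le> k) \<and> (AE x in M. x \<in> B \<longrightarrow> k \<le> X x)"
proof -
  have pair: "pair_sigma_finite M M" by unfold_locales
  define f where "f x = (if x \<in> A then ereal (X x) else -\<infinity>)" for x
  have [measurable]: "f \<in> borel_measurable M" unfolding f_def by measurable
  define K where "K = esssup M f"
  have below: "AE x in M. x \<in> A \<longrightarrow> X x \<le> K"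
    using esssup_AE[of f M] by eventually_elim (auto simp: f_def K_def)
  have "AE y in M. AE x in M. y \<in> B \<longrightarrow> x \<in> A \<longrightarrow> X x \<le> X y"
    using ordered by (subst pair_sigma_finite.AE_pair_iff[OF pair]) auto
  then have above: "AE y in M. y \<in> B \<longrightarrow> K \<le> X y"
  proof eventually_elim
    case (elim y)
    then show ?case
      unfolding K_def by (auto intro!: esssup_I elim!: eventually_mono simp: f_def)
  qed
  have "K \<noteq> \<infinity>"
  proof
    assume "K = \<infinity>"
    with above have "AE y in M. y \<notin> B" by auto
    then show False using pos(2) prob_eq_0[of B] by simp
  qed
  moreover have "K \<noteq> -\<infinity>"
  proof
    assume "K = -\<infinity>"
    with below have "AE x in M. x \<notin> A" by auto
    then show False using pos(1) prob_eq_0[of A] by simp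
  qed
  ultimately obtain k where "K = ereal k" by (cases K) auto
  then show ?thesis using below above by auto
qed

lemma comonotone_threshold:
  fixes X W :: "'a \<Rightarrow> real"
  assumes "comonotone M X W" and [measurable]: "X \<in> borel_measurable M" "W \<in> borel_measurable M"
    and pos: "0 < measure M {x \<in> space M. X x + W x \<le> q}" "0 < measure M {x \<in> space M. q \<le> X x + W x}"
  shows "\<exists>k. (AE x in M. X x + W x \<le> q \<longrightarrow> X x \<le> k) \<and> (AE x in M. q \<le> X x + W x \<longrightarrow> k \<le> X x)"
proof -
  define A where "A = {x \<in> space M. X x + W x \<le> q}"
  define B where "B = {x \<in> space M. q \<le> X x + W x}"
  have [measurable]: "A \<in> sets M" "B \<in> sets M" unfolding A_def B_def by measurable
  have "AE p in M \<Otimes>\<^sub>M M. fst p \<in> B \<longrightarrow> snd p \<in> A \<longrightarrow> X (snd p) \<le> X (fst p)"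
    using assms(1) unfolding comonotone_def
  proof eventually_elim
    case (elim p)
    then show ?case
      unfolding A_def B_def by (auto simp: zero_le_mult_iff not_le)
  qed
  from AE_threshold[OF _ _ _ pos[folded A_def B_def] this] obtain k
    where "AE x in M. x \<in> A \<longrightarrow> X x \<le> k" "AE x in M. x \<in> B \<longrightarrow> k \<le> X x" by auto
  then show ?thesis unfolding A_def B_def by (auto elim!: eventually_mono)
qed

lemma expQ_tail_density_comonotone:
  fixes X W :: "'a \<Rightarrow> real"
  assumes cm: "comonotone M X W" and X: "integrable M X" and W: "integrable M W"
    and l: "0 < l" "l \<le> 1"
  shows "expQ M (tail_density M (\<lambda>x. X x + W x) l) X = u_lam M l X"
proof -
  have [measurable]: "X \<in> borel_measurable M" "W \<in> borel_measurable M" using X W by auto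
  define S where "S x = X x + W x" for x
  have [measurable]: "S \<in> borel_measurable M" unfolding S_def by measurable
  have Z: "tail_density M S l \<in> D_lam M l" by (rule tail_density_in_D_lam) (use l in auto)
  have S_eq: "(\<lambda>x. X x + W x) = S" by (simp add: S_def fun_eq_iff)
  show ?thesis
  proof (cases "l = 1")
    case True
    then have "tail_density M S l = (\<lambda>_. 1)" by (simp add: tail_density_def fun_eq_iff)
    with True show ?thesis unfolding S_eq using Z expQ_D_lam[OF _ X] u_lam_one[OF X] by simp
  next
    case False
    with l have l1: "l < 1" by simp
    define q where "q = quantile (distr M borel S) l"
    note bounds = quantile_distr_bounds[of S, OF _ l(1) l1, folded q_def]
    have "0 < measure M {x \<in> space M. X x + W x \<le> q}"
      using bounds(1) l unfolding S_def by simp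
    moreover have "measure M {x \<in> space M. q \<le> S x} = 1 - measure M {x \<in> space M. S x < q}"
      by (subst prob_compl[symmetric]) (auto intro!: arg_cong[where f="measure M"])
    then have "0 < measure M {x \<in> space M. q \<le> X x + W x}"
      using bounds(2) l1 unfolding S_def by simp
    ultimately obtain k where
      k: "AE x in M. S x \<le> q \<longrightarrow> X x \<le> k" "AE x in M. q \<le> S x \<longrightarrow> k \<le> X x"
      using comonotone_threshold[OF cm \<open>X \<in> _\<close> \<open>W \<in> _\<close>] unfolding S_def by blast
    have "u_lam M l X = ereal (\<integral>x. tail_density M S l x * X x \<partial>M)"
    proof (rule u_lam_eq_integral_if_saturated[OF Z l(1) X])
      show "AE x in M. X x < k \<longrightarrow> tail_density M S l x = 1 / l"
        using k(2) by eventually_elim (use l l1 in \<open>auto simp: tail_density_def q_def\<close>)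
      show "AE x in M. k < X x \<longrightarrow> tail_density M S l x = 0"
        using k(1) by eventually_elim (use l l1 in \<open>auto simp: tail_density_def q_def\<close>)
    qed
    then show ?thesis unfolding S_eq using expQ_D_lam[OF Z X] by simp
  qed
qed

lemma not_comonotone_witness:
  fixes X W :: "'a \<Rightarrow> real"
  assumes [measurable]: "X \<in> borel_measurable M" "W \<in> borel_measurable M"
    and "\<not> comonotone M X W"
  shows "\<exists>x x' w w'. x < x' \<and> w' < w \<and> 0 < measure M {\<omega> \<in> space M. X \<omega> < x \<and> w < W \<omega>}
     \<and> 0 < measure M {\<omega> \<in> space M. x' < X \<omega> \<and> W \<omega> < w'}"
proof (rule ccontr)
  assume none: "\<not> ?thesis"
  define A where "A a c = {\<omega> \<in> space M. X \<omega> < real_of_rat a \<and> real_of_rat c < W \<omega>}" for a c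
  define B where "B b d = {\<omega> \<in> space M. real_of_rat b < X \<omega> \<and> W \<omega> < real_of_rat d}" for b d
  have [measurable]: "A a c \<in> sets M" "B b d \<in> sets M" for a b c d
    unfolding A_def B_def by measurable
  have separate: "\<not> (X u < X v \<and> W v < W u)"
    if "\<forall>a b c d. a < b \<longrightarrow> d < c \<longrightarrow> (u, v) \<notin> A a c \<times> B b d" "u \<in> space M" "v \<in> space M" for u v
  proof
    assume uv: "X u < X v \<and> W v < W u"
    obtain a b where ab: "X u < real_of_rat a" "a < b" "real_of_rat b < X v"
      using rat_pair_between[of "X u" "X v"] uv by blast
    obtain d c where dc: "W v < real_of_rat d" "d < c" "real_of_rat c < W u"
      using rat_pair_between[of "W v" "W u"] uv by blast
    have "(u, v) \<in> A a c \<times> B b d" using that(2,3) ab dc by (simp add: A_def B_def)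
    with that(1) ab(2) dc(2) show False by blast
  qed
  have null: "AE p in M \<Otimes>\<^sub>M M. p \<notin> A a c \<times> B b d \<and> p \<notin> B b d \<times> A a c"
    if "a < b" "d < c" for a b c d
  proof -
    have "real_of_rat a < real_of_rat b" "real_of_rat d < real_of_rat c"
      using that by (simp_all add: of_rat_less)
    then have "\<not> (0 < measure M (A a c) \<and> 0 < measure M (B b d))"
      using none unfolding A_def B_def by blast
    then have "measure M (A a c) = 0 \<or> measure M (B b d) = 0"
      using measure_nonneg[of M "A a c"] measure_nonneg[of M "B b d"] by linarith
    then have "A a c \<in> null_sets M \<or> B b d \<in> null_sets M"
      by (auto simp: null_sets_def emeasure_eq_measure)
    then have "AE p in M \<Otimes>\<^sub>M M. p \<notin> A a c \<times> B b d" "AE p in M \<Otimes>\<^sub>M M. p \<notin> B b d \<times> A a c"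
      by (auto intro!: AE_not_in)
    then show ?thesis by eventually_elim simp
  qed
  have "AE p in M \<Otimes>\<^sub>M M. a < b \<longrightarrow> d < c \<longrightarrow> p \<notin> A a c \<times> B b d \<and> p \<notin> B b d \<times> A a c"
    for a b c d
    by (cases "a < b \<and> d < c") (use null[of a b d c] in \<open>auto elim: eventually_mono\<close>)
  then have "AE p in M \<Otimes>\<^sub>M M. \<forall>a b c d. a < b \<longrightarrow> d < c \<longrightarrow> p \<notin> A a c \<times> B b d \<and> p \<notin> B b d \<times> A a c"
    by (simp add: AE_all_countable)
  then have "comonotone M X W"
    unfolding comonotone_def using AE_space
  proof eventually_elim
    case (elim p)
    obtain u v where p: "p = (u, v)" by (cases p)
    have uv: "u \<in> space M" "v \<in> space M" using elim(2) by (auto simp: p space_pair_measure)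
    have "\<not> (X u < X v \<and> W v < W u)" by (rule separate) (use elim(1) uv in \<open>auto simp: p\<close>)
    moreover have "\<not> (X v < X u \<and> W u < W v)" by (rule separate) (use elim(1) uv in \<open>auto simp: p\<close>)
    ultimately show ?case by (auto simp: p zero_le_mult_iff)
  qed
  with assms(3) show False ..
qed

lemma u_lam_strictly_superadditive:
  fixes X W :: "'a \<Rightarrow> real"
  assumes X: "integrable M X" and W: "integrable M W"
    and "x < x'" "w' < w"
    and pos_A: "0 < measure M {\<omega> \<in> space M. X \<omega> < x \<and> w < W \<omega>}"
    and pos_B: "0 < measure M {\<omega> \<in> space M. x' < X \<omega> \<and> W \<omega> < w'}"
    and lower: "measure M {\<omega> \<in> space M. X \<omega> \<le> x \<and> W \<omega> \<le> w'} < l"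
    and upper: "l < measure M {\<omega> \<in> space M. W \<omega> < w \<or> X \<omega> < x'}"
  shows "u_lam M l X + u_lam M l W < u_lam M l (\<lambda>\<omega>. X \<omega> + W \<omega>)"
proof (rule ccontr)
  assume not_strict: "\<not> ?thesis"
  have l: "0 < l" "l < 1" using lower upper measure_nonneg[of M] prob_le_1 by (meson le_less_trans less_le_trans)+
  define S where "S \<omega> = X \<omega> + W \<omega>" for \<omega>
  have S: "integrable M S" unfolding S_def using X W by simp
  define Z where "Z = tail_density M S l"
  have Z: "Z \<in> D_lam M l" unfolding Z_def using S l by (intro tail_density_in_D_lam) auto
  have "u_lam M l S = ereal (\<integral>\<omega>. Z \<omega> * X \<omega> \<partial>M) + ereal (\<integral>\<omega>. Z \<omega> * W \<omega> \<partial>M)"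
    using u_lam_eq_tail_density[OF S l] integrable_D_lam_mult[OF Z X] integrable_D_lam_mult[OF Z W]
    by (simp add: Z_def S_def distrib_left)
  moreover have "u_lam M l S \<le> u_lam M l X + u_lam M l W"
    using not_strict by (simp add: S_def[abs_def] not_less)
  moreover note u_lam_le_integral[OF Z X] u_lam_le_integral[OF Z W]
    u_lam_finite[OF _ _ X, of l] u_lam_finite[OF _ _ W, of l]
  ultimately have opt: "u_lam M l X = ereal (\<integral>\<omega>. Z \<omega> * X \<omega> \<partial>M)" "u_lam M l W = ereal (\<integral>\<omega>. Z \<omega> * W \<omega> \<partial>M)"
    using l by (cases "u_lam M l X"; cases "u_lam M l W"; simp)+
  show False
    using no_common_minimizer[OF Z l(1) _ _ minimizer_dichotomy[OF Z l(1) X opt(1)]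
        minimizer_dichotomy[OF Z l(1) W opt(2)] assms(3-8)] X W
    by auto
qed

lemma not_comonotone_gap:
  fixes X W :: "'a \<Rightarrow> real"
  assumes X: "integrable M X" and W: "integrable M W" and "\<not> comonotone M X W"
  obtains a b where "0 \<le> a" "a < b" "b \<le> 1"
    "\<And>l. l \<in> {a<..<b} \<Longrightarrow> u_lam M l X + u_lam M l W < u_lam M l (\<lambda>\<omega>. X \<omega> + W \<omega>)"
proof -
  have [measurable]: "X \<in> borel_measurable M" "W \<in> borel_measurable M" using X W by auto
  obtain x x' w w' where "x < x'" "w' < w"
    and pos_A: "0 < measure M {\<omega> \<in> space M. X \<omega> < x \<and> w < W \<omega>}"
    and pos_B: "0 < measure M {\<omega> \<in> space M. x' < X \<omega> \<and> W \<omega> < w'}"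
    using not_comonotone_witness[OF _ _ assms(3)] by auto
  define a where "a = measure M {\<omega> \<in> space M. X \<omega> \<le> x \<and> W \<omega> \<le> w'}"
  define b where "b = measure M {\<omega> \<in> space M. W \<omega> < w \<or> X \<omega> < x'}"
  have "a + measure M {\<omega> \<in> space M. X \<omega> < x \<and> w < W \<omega>}
      = measure M ({\<omega> \<in> space M. X \<omega> \<le> x \<and> W \<omega> \<le> w'} \<union> {\<omega> \<in> space M. X \<omega> < x \<and> w < W \<omega>})"
    unfolding a_def using \<open>w' < w\<close> by (intro finite_measure_Union[symmetric]) auto
  also have "\<dots> \<le> b"
    unfolding b_def using \<open>x < x'\<close> by (intro finite_measure_mono) auto
  finally have "a < b" using pos_A by simp
  show ?thesis
  proof (rule that[OF _ \<open>a < b\<close>])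
    show "0 \<le> a" "b \<le> 1" by (simp_all add: a_def b_def)
    show "u_lam M l X + u_lam M l W < u_lam M l (\<lambda>\<omega>. X \<omega> + W \<omega>)" if "l \<in> {a<..<b}" for l
      using that u_lam_strictly_superadditive[OF X W \<open>x < x'\<close> \<open>w' < w\<close> pos_A pos_B]
      unfolding a_def b_def by auto
  qed
qed

end

section \<open>Weighted V@R\<close>

lemma D_mu_is_density: "Z \<in> D_mu M mu \<Longrightarrow> is_density M Z"
  by (simp add: D_mu_def)

locale weighted_var = M: prob_space M + mu: prob_space mu
  for M :: "'a measure" and mu :: "real measure" +
  assumes sets_mu: "sets mu = sets borel"
    and mu_unit_interval: "emeasure mu {0<..1} = 1"
begin

lemma sets_mu_borel[measurable_cong]: "sets mu = sets borel"
  by (rule sets_mu)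

lemma AE_mu_unit_interval: "AE l in mu. 0 < l \<and> l \<le> 1"
proof -
  have "{0<..1::real} \<in> sets mu" using sets_mu by simp
  then have "AE l in mu. l \<in> {0<..1}"
    using mu_unit_interval by (intro mu.AE_prob_1) (simp add: mu.emeasure_eq_measure)
  then show ?thesis by eventually_elim auto
qed

lemma one_in_D_mu: "(\<lambda>_. 1) \<in> D_mu M mu"
  unfolding D_mu_def
proof safe
  show "is_density M (\<lambda>_. 1)" using M.one_in_D_lam[of 1] by (simp add: D_lam_def)
  fix Y :: "'a \<Rightarrow> real"
  have "AE l in mu. u_lam M l Y \<le> expQ M (\<lambda>_. 1) Y"
    using AE_mu_unit_interval by eventually_elim (auto intro: u_lam_le_expQ M.one_in_D_lam)
  then have "u_mu M mu Y \<le> ext_int mu (\<lambda>_. expQ M (\<lambda>_. 1) Y)"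
    unfolding u_mu_def by (rule ext_int_mono_AE)
  then show "u_mu M mu Y \<le> expQ M (\<lambda>_. 1) Y" by (simp add: mu.ext_int_const)
qed

lemma u_lam_as_real_function:
  fixes Y :: "'a \<Rightarrow> real"
  assumes Y: "integrable M Y"
  obtains f where "f \<in> borel_measurable mu" "AE l in mu. u_lam M l Y = ereal (f l)"
proof
  define f where "f l = indicator {0<..1} l * real_of_ereal (u_lam M l Y)" for l
  have "mono_on {0<..1} (\<lambda>l. real_of_ereal (u_lam M l Y))"
  proof (rule mono_onI)
    fix l l' :: real assume "l \<in> {0<..1}" "l' \<in> {0<..1}" "l \<le> l'"
    then show "real_of_ereal (u_lam M l Y) \<le> real_of_ereal (u_lam M l' Y)"
      using u_lam_mono[of l l' M Y] M.u_lam_finite[OF _ _ Y, of l] M.u_lam_finite[OF _ _ Y, of l']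
      by (cases "u_lam M l Y"; cases "u_lam M l' Y") auto
  qed
  then have "(\<lambda>l. real_of_ereal (u_lam M l Y)) \<in> borel_measurable (restrict_space borel {0<..1})"
    by (rule borel_measurable_mono_on_fnc)
  then have "(\<lambda>l. indicator {0<..1::real} l *\<^sub>R real_of_ereal (u_lam M l Y)) \<in> borel_measurable borel"
    by (subst (asm) borel_measurable_restrict_space_iff) auto
  then show "f \<in> borel_measurable mu"
    unfolding f_def using measurable_cong_sets[OF sets_mu refl] by simp
  show "AE l in mu. u_lam M l Y = ereal (f l)"
    using AE_mu_unit_interval
    by eventually_elim (use M.u_lam_finite[OF _ _ Y] in \<open>auto simp: f_def ereal_real'\<close>)
qed

lemma u_mu_eq_integral:
  fixes Y :: "'a \<Rightarrow> real"
  assumes Y: "integrable M Y" and fin: "\<bar>u_mu M mu Y\<bar> \<noteq> \<infinity>"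
  obtains f where "integrable mu f" "AE l in mu. u_lam M l Y = ereal (f l)"
    "u_mu M mu Y = ereal (integral\<^sup>L mu f)"
proof -
  obtain f where f: "f \<in> borel_measurable mu" "AE l in mu. u_lam M l Y = ereal (f l)"
    using u_lam_as_real_function[OF Y] by blast
  have u_mu: "u_mu M mu Y = ext_int mu (\<lambda>l. ereal (f l))"
    unfolding u_mu_def by (rule ext_int_cong_AE[OF f(2)])
  have "integrable mu f" using fin f(1) unfolding u_mu by (intro integrable_if_ext_int_finite) auto
  with f(2) u_mu show ?thesis by (intro that) (auto simp: ext_int_eq_integral)
qed

lemma emeasure_subinterval_pos:
  assumes "measure_support mu = {0..1}" "0 \<le> a" "a < b" "b \<le> 1"
  shows "0 < emeasure mu {a<..<b}"
proof -
  have "(a + b) / 2 \<in> measure_support mu" using assms by auto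
  then have "0 < emeasure mu (ball ((a + b) / 2) ((b - a) / 2))"
    unfolding measure_support_def using assms by auto
  also have "ball ((a + b) / 2) ((b - a) / 2) = {a<..<b}"
    by (auto simp: ball_eq_greaterThanLessThan field_simps)
  finally show ?thesis .
qed

lemma AE_u_lam_additive_if_u_mu_subadditive:
  fixes X W :: "'a \<Rightarrow> real"
  assumes X: "integrable M X" and W: "integrable M W"
    and fin: "\<bar>u_mu M mu X\<bar> \<noteq> \<infinity>" "\<bar>u_mu M mu W\<bar> \<noteq> \<infinity>"
    and subadditive: "u_mu M mu (\<lambda>\<omega>. X \<omega> + W \<omega>) \<le> u_mu M mu X + u_mu M mu W"
  shows "AE l in mu. u_lam M l (\<lambda>\<omega>. X \<omega> + W \<omega>) = u_lam M l X + u_lam M l W"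
proof -
  define S where "S = (\<lambda>\<omega>. X \<omega> + W \<omega>)"
  have S: "integrable M S" unfolding S_def using X W by simp
  obtain fX where fX: "integrable mu fX" "AE l in mu. u_lam M l X = ereal (fX l)"
    "u_mu M mu X = ereal (integral\<^sup>L mu fX)" using u_mu_eq_integral[OF X fin(1)] by blast
  obtain fW where fW: "integrable mu fW" "AE l in mu. u_lam M l W = ereal (fW l)"
    "u_mu M mu W = ereal (integral\<^sup>L mu fW)" using u_mu_eq_integral[OF W fin(2)] by blast
  have superadditive: "AE l in mu. ereal (fX l + fW l) \<le> u_lam M l S"
    using AE_mu_unit_interval fX(2) fW(2)
  proof eventually_elim
    case (elim l)
    then show ?case using u_lam_superadditive[OF _ X W, of l] by (simp add: S_def)
  qed
  then have "ext_int mu (\<lambda>l. ereal (fX l + fW l)) \<le> u_mu M mu S"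
    unfolding u_mu_def by (rule ext_int_mono_AE)
  then have "ereal (integral\<^sup>L mu fX + integral\<^sup>L mu fW) \<le> u_mu M mu S"
    using fX(1) fW(1) by (simp add: ext_int_eq_integral)
  moreover have "u_mu M mu S \<le> ereal (integral\<^sup>L mu fX + integral\<^sup>L mu fW)"
    using subadditive fX(3) fW(3) by (simp add: S_def)
  ultimately have "\<bar>u_mu M mu S\<bar> \<noteq> \<infinity>" by auto
  then obtain fS where fS: "integrable mu fS" "AE l in mu. u_lam M l S = ereal (fS l)"
    "u_mu M mu S = ereal (integral\<^sup>L mu fS)"
    by (rule u_mu_eq_integral[OF S])
  have nonneg: "AE l in mu. 0 \<le> fS l - fX l - fW l"
    using superadditive fS(2) by eventually_elim auto
  have "(\<integral>l. fS l - fX l - fW l \<partial>mu) \<le> 0"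
    using fS(1,3) fX(1) fW(1) subadditive fX(3) fW(3) by (simp add: S_def)
  then have "AE l in mu. fS l - fX l - fW l = 0"
    using integral_nonneg_AE[OF nonneg] fS(1) fX(1) fW(1)
    by (subst integral_nonneg_eq_0_iff_AE[symmetric, OF _ nonneg]) auto
  with fX(2) fW(2) fS(2) show ?thesis
    by eventually_elim (simp add: S_def)
qed

lemma comonotone_if_u_mu_subadditive:
  fixes X W :: "'a \<Rightarrow> real"
  assumes support: "measure_support mu = {0..1}" and X: "integrable M X" and W: "integrable M W"
    and fin: "\<bar>u_mu M mu X\<bar> \<noteq> \<infinity>" "\<bar>u_mu M mu W\<bar> \<noteq> \<infinity>"
    and subadditive: "u_mu M mu (\<lambda>\<omega>. X \<omega> + W \<omega>) \<le> u_mu M mu X + u_mu M mu W"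
  shows "comonotone M X W"
proof (rule ccontr)
  assume "\<not> comonotone M X W"
  then obtain a b where "0 \<le> a" "a < b" "b \<le> 1"
    and gap: "\<And>l. l \<in> {a<..<b} \<Longrightarrow> u_lam M l X + u_lam M l W < u_lam M l (\<lambda>\<omega>. X \<omega> + W \<omega>)"
    using M.not_comonotone_gap[OF X W] by blast
  have "AE l in mu. l \<notin> {a<..<b}"
    using AE_u_lam_additive_if_u_mu_subadditive[OF X W fin subadditive]
  proof eventually_elim
    case (elim l)
    then show ?case using gap[of l] by auto
  qed
  moreover have "{a<..<b} \<in> sets mu" using sets_mu by simp
  ultimately have "{a<..<b} \<in> null_sets mu" by (simp only: AE_iff_null_sets)
  then show False
    using emeasure_subinterval_pos[OF support \<open>0 \<le> a\<close> \<open>a < b\<close> \<open>b \<le> 1\<close>] by auto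
qed

end

section \<open>Mixtures of densities\<close>

text \<open>The conversion enn2real only matters on the null set where the integral is infinite.\<close>

definition mixture :: "real measure \<Rightarrow> (real \<Rightarrow> 'a \<Rightarrow> real) \<Rightarrow> 'a \<Rightarrow> real" where
  "mixture mu Zf x = enn2real (\<integral>\<^sup>+ l. ennreal (Zf l x) \<partial>mu)"

context weighted_var
begin

lemma nn_integral_swap:
  fixes f :: "real \<Rightarrow> 'a \<Rightarrow> ennreal"
  assumes "(\<lambda>p. f (fst p) (snd p)) \<in> borel_measurable (mu \<Otimes>\<^sub>M M)"
  shows "(\<integral>\<^sup>+ x. (\<integral>\<^sup>+ l. f l x \<partial>mu) \<partial>M) = (\<integral>\<^sup>+ l. (\<integral>\<^sup>+ x. f l x \<partial>M) \<partial>mu)"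
proof -
  interpret pair_sigma_finite mu M by unfold_locales
  show ?thesis using assms by (intro Fubini') (simp add: case_prod_beta')
qed

context
  fixes Zf :: "real \<Rightarrow> 'a \<Rightarrow> real"
  assumes Zf_measurable: "(\<lambda>(l, x). Zf l x) \<in> borel_measurable (mu \<Otimes>\<^sub>M M)"
    and Zf_D_lam: "\<And>l. 0 < l \<Longrightarrow> l \<le> 1 \<Longrightarrow> Zf l \<in> D_lam M l"
begin

lemma borel_measurable_Zf[measurable]: "(\<lambda>p. Zf (fst p) (snd p)) \<in> borel_measurable (mu \<Otimes>\<^sub>M M)"
  using Zf_measurable by (simp add: case_prod_beta')

lemma borel_measurable_Zf_integral[measurable]:
  "(\<lambda>x. \<integral>\<^sup>+ l. ennreal (Zf l x) \<partial>mu) \<in> borel_measurable M"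
proof -
  have "(\<lambda>p. Zf (snd p) (fst p)) \<in> borel_measurable (M \<Otimes>\<^sub>M mu)"
    using measurable_compose[OF measurable_pair_swap' borel_measurable_Zf] by (simp add: case_prod_beta')
  then have "(\<lambda>(x, l). ennreal (Zf l x)) \<in> borel_measurable (M \<Otimes>\<^sub>M mu)"
    by (simp add: case_prod_beta')
  then show ?thesis by measurable
qed

lemma borel_measurable_mixture[measurable]: "mixture mu Zf \<in> borel_measurable M"
  unfolding mixture_def by measurable

lemma borel_measurable_Zf_section: "x \<in> space M \<Longrightarrow> (\<lambda>l. ennreal (Zf l x)) \<in> borel_measurable mu"
  using measurable_Pair1[OF borel_measurable_Zf, of x] by simp

lemma AE_Zf_nonneg:
  assumes "x \<in> space M"
  shows "AE l in mu. 0 \<le> Zf l x"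
  using AE_mu_unit_interval
proof eventually_elim
  case (elim l)
  then show ?case using D_lamD(2)[OF Zf_D_lam assms] by simp
qed

lemma AE_Zf_mass: "AE l in mu. (\<integral>\<^sup>+ x. ennreal (Zf l x) \<partial>M) = 1"
  using AE_mu_unit_interval
proof eventually_elim
  case (elim l)
  then show ?case using Zf_D_lam[of l] by (simp add: D_lam_def is_density_def)
qed

lemma nn_integral_mixture_mult:
  fixes Y :: "'a \<Rightarrow> real"
  assumes [measurable]: "Y \<in> borel_measurable M"
  shows "(\<integral>\<^sup>+ x. ennreal (mixture mu Zf x * Y x) \<partial>M)
       = (\<integral>\<^sup>+ l. (\<integral>\<^sup>+ x. ennreal (Zf l x * Y x) \<partial>M) \<partial>mu)"
proof -
  have "(\<integral>\<^sup>+ x. (\<integral>\<^sup>+ l. ennreal (Zf l x) \<partial>mu) \<partial>M) = (\<integral>\<^sup>+ l. (\<integral>\<^sup>+ x. ennreal (Zf l x) \<partial>M) \<partial>mu)"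
    by (rule nn_integral_swap) measurable
  also have "\<dots> = (\<integral>\<^sup>+ l. 1 \<partial>mu)"
    using AE_Zf_mass by (intro nn_integral_cong_AE) simp
  finally have "AE x in M. (\<integral>\<^sup>+ l. ennreal (Zf l x) \<partial>mu) \<noteq> \<infinity>"
    by (intro nn_integral_PInf_AE) (auto simp: mu.emeasure_space_1)
  then have "AE x in M. ennreal (mixture mu Zf x * Y x) = (\<integral>\<^sup>+ l. ennreal (Zf l x * Y x) \<partial>mu)"
    using AE_space
  proof eventually_elim
    case (elim x)
    show ?case
    proof (cases "0 \<le> Y x")
      case True
      have "ennreal (mixture mu Zf x * Y x) = (\<integral>\<^sup>+ l. ennreal (Zf l x) \<partial>mu) * ennreal (Y x)"
        using elim(1) True by (simp add: mixture_def ennreal_mult less_top)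
      also have "\<dots> = (\<integral>\<^sup>+ l. ennreal (Zf l x) * ennreal (Y x) \<partial>mu)"
        using borel_measurable_Zf_section[OF elim(2)] by (rule nn_integral_multc[symmetric])
      also have "\<dots> = (\<integral>\<^sup>+ l. ennreal (Zf l x * Y x) \<partial>mu)"
        using AE_Zf_nonneg[OF elim(2)] True
        by (intro nn_integral_cong_AE) (auto elim!: eventually_mono simp: ennreal_mult)
      finally show ?thesis .
    next
      case False
      have "AE l in mu. ennreal (Zf l x * Y x) = 0"
        using AE_Zf_nonneg[OF elim(2)]
        by eventually_elim (use False in \<open>simp add: ennreal_neg mult_nonneg_nonpos\<close>)
      then show ?thesis
        using False by (simp add: nn_integral_cong_AE mixture_def ennreal_neg mult_nonneg_nonpos)
    qed
  qed
  then have "(\<integral>\<^sup>+ x. ennreal (mixture mu Zf x * Y x) \<partial>M)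
      = (\<integral>\<^sup>+ x. (\<integral>\<^sup>+ l. ennreal (Zf l x * Y x) \<partial>mu) \<partial>M)"
    by (rule nn_integral_cong_AE)
  also have "\<dots> = (\<integral>\<^sup>+ l. (\<integral>\<^sup>+ x. ennreal (Zf l x * Y x) \<partial>M) \<partial>mu)"
    by (rule nn_integral_swap) measurable
  finally show ?thesis .
qed

lemma mixture_is_density: "is_density M (mixture mu Zf)"
proof -
  have "(\<integral>\<^sup>+ x. ennreal (mixture mu Zf x) \<partial>M) = (\<integral>\<^sup>+ l. (\<integral>\<^sup>+ x. ennreal (Zf l x) \<partial>M) \<partial>mu)"
    using nn_integral_mixture_mult[of "\<lambda>_. 1"] by simp
  also have "\<dots> = (\<integral>\<^sup>+ l. 1 \<partial>mu)"
    using AE_Zf_mass by (intro nn_integral_cong_AE) simp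
  finally show ?thesis unfolding is_density_def by (simp add: mixture_def mu.emeasure_space_1)
qed

lemma borel_measurable_Zf_nn_integral[measurable]:
  fixes Y :: "'a \<Rightarrow> real"
  assumes [measurable]: "Y \<in> borel_measurable M"
  shows "(\<lambda>l. \<integral>\<^sup>+ x. ennreal (Zf l x * Y x) \<partial>M) \<in> borel_measurable mu"
  by (rule M.borel_measurable_nn_integral) (simp add: case_prod_beta')

lemma expQ_mixture:
  fixes Y :: "'a \<Rightarrow> real"
  assumes [measurable]: "Y \<in> borel_measurable M"
    and fin: "(\<integral>\<^sup>+ l. (\<integral>\<^sup>+ x. ennreal (- (Zf l x * Y x)) \<partial>M) \<partial>mu) \<noteq> \<infinity>"
  shows "expQ M (mixture mu Zf) Y = ext_int mu (\<lambda>l. expQ M (Zf l) Y)"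
proof -
  define p where "p l = (\<integral>\<^sup>+ x. ennreal (Zf l x * Y x) \<partial>M)" for l
  define n where "n l = (\<integral>\<^sup>+ x. ennreal (- (Zf l x * Y x)) \<partial>M)" for l
  have [measurable]: "p \<in> borel_measurable mu" "n \<in> borel_measurable mu"
    unfolding p_def n_def by measurable
  have fin': "(\<integral>\<^sup>+ l. n l \<partial>mu) \<noteq> \<infinity>" using fin by (simp add: n_def)
  have "expQ M (mixture mu Zf) Y = enn2ereal (\<integral>\<^sup>+ l. p l \<partial>mu) - enn2ereal (\<integral>\<^sup>+ l. n l \<partial>mu)"
    using nn_integral_mixture_mult[of Y] nn_integral_mixture_mult[of "\<lambda>x. - Y x"] fin'
    unfolding expQ_def ext_int_ereal by (simp add: p_def n_def)
  also have "\<dots> = ext_int mu (\<lambda>l. enn2ereal (p l) - enn2ereal (n l))"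
    by (rule ext_int_enn2ereal_diff[symmetric]) (use fin' in auto)
  also have "\<dots> = ext_int mu (\<lambda>l. expQ M (Zf l) Y)"
  proof (rule ext_int_cong_AE)
    have "AE l in mu. n l \<noteq> \<infinity>" using fin' by (intro nn_integral_PInf_AE) auto
    then show "AE l in mu. enn2ereal (p l) - enn2ereal (n l) = expQ M (Zf l) Y"
      by eventually_elim (simp add: expQ_def ext_int_ereal p_def n_def)
  qed
  finally show ?thesis .
qed

lemma nn_integral_neg_part_above_finite:
  fixes Y :: "'a \<Rightarrow> real"
  assumes [measurable]: "Y \<in> borel_measurable M"
    and fin: "(\<integral>\<^sup>+ x. ennreal (- Y x) \<partial>M) \<noteq> \<infinity>" and "0 < p"
  shows "(\<integral>\<^sup>+ l. (\<integral>\<^sup>+ x. ennreal (- (Zf l x * Y x)) \<partial>M) * indicator {p..} l \<partial>mu) \<noteq> \<infinity>"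
proof -
  have "AE l in mu. (\<integral>\<^sup>+ x. ennreal (- (Zf l x * Y x)) \<partial>M) * indicator {p..} l
      \<le> ennreal (1 / p) * (\<integral>\<^sup>+ x. ennreal (- Y x) \<partial>M)"
    using AE_mu_unit_interval
    by eventually_elim (auto simp: indicator_def intro!: M.nn_integral_D_lam_neg_le Zf_D_lam \<open>0 < p\<close>)
  then have "(\<integral>\<^sup>+ l. (\<integral>\<^sup>+ x. ennreal (- (Zf l x * Y x)) \<partial>M) * indicator {p..} l \<partial>mu)
      \<le> (\<integral>\<^sup>+ l. ennreal (1 / p) * (\<integral>\<^sup>+ x. ennreal (- Y x) \<partial>M) \<partial>mu)"
    by (rule nn_integral_mono_AE)
  also have "\<dots> < \<infinity>"
    using fin by (simp add: mu.emeasure_space_1 ennreal_mult_less_top less_top)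
  finally show ?thesis by simp
qed

lemma u_mu_eq_MInf_if_neg_part_infinite:
  fixes Y :: "'a \<Rightarrow> real"
  assumes [measurable]: "Y \<in> borel_measurable M"
    and inf: "(\<integral>\<^sup>+ l. (\<integral>\<^sup>+ x. ennreal (- (Zf l x * Y x)) \<partial>M) \<partial>mu) = \<infinity>"
  shows "u_mu M mu Y = -\<infinity>"
proof -
  define n where "n l = (\<integral>\<^sup>+ x. ennreal (- (Zf l x * Y x)) \<partial>M)" for l
  have [measurable]: "n \<in> borel_measurable mu" unfolding n_def by measurable
  have inf_n: "(\<integral>\<^sup>+ l. n l \<partial>mu) = \<infinity>" using inf unfolding n_def .
  define U where "U l = e2ennreal (max (- u_lam M l Y) 0)" for l
  txt \<open>
    Levels above P(Y < 0) contribute finitely to the negative part, and below P(Y < 0) the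
    negative part of E_Zf\<lambda> Y is dominated by that of u_\<lambda>(Y).
  \<close>
  have "(\<integral>\<^sup>+ l. U l \<partial>mu) = \<infinity>"
  proof (cases "(\<integral>\<^sup>+ x. ennreal (- Y x) \<partial>M) = \<infinity>")
    case True
    have "AE l in mu. U l = \<infinity>"
      using AE_mu_unit_interval
      by eventually_elim (simp add: U_def M.u_lam_eq_MInf_if_neg_part_infinite[OF True])
    then show ?thesis by (simp add: nn_integral_cong_AE mu.emeasure_space_1)
  next
    case False
    define p0 where "p0 = measure M {x \<in> space M. Y x < 0}"
    have "0 < p0"
    proof (rule ccontr)
      assume "\<not> 0 < p0"
      then have "AE x in M. 0 \<le> Y x"
        using M.prob_Collect_eq_0[of "\<lambda>x. Y x < 0"] measure_nonneg[of M "{x \<in> space M. Y x < 0}"]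
        by (simp add: p0_def not_less)
      then have "n l = 0" if "0 < l" "l \<le> 1" for l
      proof -
        have "AE x in M. ennreal (- (Zf l x * Y x)) = 0"
          using \<open>AE x in M. 0 \<le> Y x\<close> AE_space
          by eventually_elim (use D_lamD(2)[OF Zf_D_lam[OF that]] in \<open>simp add: ennreal_neg\<close>)
        then show ?thesis unfolding n_def by (simp add: nn_integral_cong_AE)
      qed
      then have "AE l in mu. n l = 0" using AE_mu_unit_interval by (auto elim: eventually_mono)
      then show False using inf_n by (simp add: nn_integral_cong_AE)
    qed
    have "AE l in mu. n l * indicator {..<p0} l \<le> U l"
      using AE_mu_unit_interval
    proof eventually_elim
      case (elim l)
      show ?case
      proof (cases "l < p0")
        case True
        have "u_lam M l Y \<le> - enn2ereal (n l)"
          using M.u_lam_le_neg_part[OF Zf_D_lam _ _ True[unfolded p0_def]] elim by (simp add: n_def)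
        then have "enn2ereal (n l) \<le> - u_lam M l Y" by (metis ereal_minus_le_minus ereal_uminus_uminus)
        then have "n l \<le> U l" unfolding U_def by (metis e2ennreal_enn2ereal e2ennreal_mono max.coboundedI1)
        then show ?thesis using True by simp
      qed simp
    qed
    then have below: "(\<integral>\<^sup>+ l. n l * indicator {..<p0} l \<partial>mu) \<le> (\<integral>\<^sup>+ l. U l \<partial>mu)"
      by (rule nn_integral_mono_AE)
    have "(\<integral>\<^sup>+ l. n l \<partial>mu)
        = (\<integral>\<^sup>+ l. n l * indicator {..<p0} l \<partial>mu) + (\<integral>\<^sup>+ l. n l * indicator {p0..} l \<partial>mu)"
      by (subst nn_integral_add[symmetric]) (auto intro!: nn_integral_cong simp: indicator_def)
    with inf_n have "(\<integral>\<^sup>+ l. n l * indicator {..<p0} l \<partial>mu) + (\<integral>\<^sup>+ l. n l * indicator {p0..} l \<partial>mu) = \<infinity>"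
      by simp
    moreover have "(\<integral>\<^sup>+ l. n l * indicator {p0..} l \<partial>mu) \<noteq> \<infinity>"
      unfolding n_def by (rule nn_integral_neg_part_above_finite[OF _ False \<open>0 < p0\<close>]) simp
    ultimately have "(\<integral>\<^sup>+ l. n l * indicator {..<p0} l \<partial>mu) = \<infinity>"
      by (simp add: ennreal_add_eq_top)
    with below show ?thesis by (simp add: top_unique)
  qed
  then show ?thesis by (simp add: u_mu_def ext_int_def U_def)
qed

lemma mixture_in_D_mu: "mixture mu Zf \<in> D_mu M mu"
  unfolding D_mu_def
proof (safe intro!: mixture_is_density)
  fix Y :: "'a \<Rightarrow> real" assume [measurable]: "Y \<in> borel_measurable M"
  show "u_mu M mu Y \<le> expQ M (mixture mu Zf) Y"
  proof (cases "(\<integral>\<^sup>+ l. (\<integral>\<^sup>+ x. ennreal (- (Zf l x * Y x)) \<partial>M) \<partial>mu) = \<infinity>")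
    case True
    then show ?thesis using u_mu_eq_MInf_if_neg_part_infinite by simp
  next
    case False
    have "AE l in mu. u_lam M l Y \<le> expQ M (Zf l) Y"
      using AE_mu_unit_interval by eventually_elim (simp add: u_lam_le_expQ Zf_D_lam)
    then have "u_mu M mu Y \<le> ext_int mu (\<lambda>l. expQ M (Zf l) Y)"
      unfolding u_mu_def by (rule ext_int_mono_AE)
    then show ?thesis using expQ_mixture[OF _ False] by simp
  qed
qed

lemma expQ_mixture_eq_u_mu:
  fixes Y :: "'a \<Rightarrow> real"
  assumes [measurable]: "Y \<in> borel_measurable M"
    and fin: "(\<integral>\<^sup>+ x. ennreal (mixture mu Zf x * \<bar>Y x\<bar>) \<partial>M) \<noteq> \<infinity>"
    and attained: "\<And>l. 0 < l \<Longrightarrow> l \<le> 1 \<Longrightarrow> expQ M (Zf l) Y = u_lam M l Y"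
  shows "expQ M (mixture mu Zf) Y = u_mu M mu Y"
proof -
  have "- (mixture mu Zf x * Y x) \<le> mixture mu Zf x * \<bar>Y x\<bar>" for x
    using mult_left_mono[of "- Y x" "\<bar>Y x\<bar>" "mixture mu Zf x"] by (simp add: mixture_def)
  then have "(\<integral>\<^sup>+ x. ennreal (- (mixture mu Zf x * Y x)) \<partial>M)
      \<le> (\<integral>\<^sup>+ x. ennreal (mixture mu Zf x * \<bar>Y x\<bar>) \<partial>M)"
    by (intro nn_integral_mono ennreal_leI)
  then have "(\<integral>\<^sup>+ l. (\<integral>\<^sup>+ x. ennreal (- (Zf l x * Y x)) \<partial>M) \<partial>mu) \<noteq> \<infinity>"
    using fin nn_integral_mixture_mult[of "\<lambda>x. - Y x"] by (auto simp: top_unique)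
  then have "expQ M (mixture mu Zf) Y = ext_int mu (\<lambda>l. expQ M (Zf l) Y)"
    by (intro expQ_mixture) simp
  also have "\<dots> = u_mu M mu Y"
  proof -
    have "AE l in mu. expQ M (Zf l) Y = u_lam M l Y"
      using AE_mu_unit_interval by eventually_elim (simp add: attained)
    then show ?thesis unfolding u_mu_def by (rule ext_int_cong_AE)
  qed
  finally show ?thesis .
qed

end

end

lemma L1_D_bounded:
  fixes X :: "'a \<Rightarrow> real"
  assumes L: "L1_D M D X" and D: "\<And>Z. Z \<in> D \<Longrightarrow> is_density M Z"
  obtains C where "0 \<le> C" "\<And>Z. Z \<in> D \<Longrightarrow> (\<integral>\<^sup>+ x. ennreal (Z x * \<bar>X x\<bar>) \<partial>M) \<le> ennreal C"
proof -
  have [measurable]: "X \<in> borel_measurable M" using L unfolding L1_D_def by blast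
  have "eventually (\<lambda>n::nat. (SUP Z\<in>D. \<integral>\<^sup>+ x. ennreal (Z x * \<bar>X x\<bar> * indicator {y. \<bar>X y\<bar> > real n} x) \<partial>M) < 1)
      sequentially"
    using L unfolding L1_D_def by (intro order_tendstoD(2)) auto
  then obtain n :: nat where n: "\<And>Z. Z \<in> D \<Longrightarrow>
      (\<integral>\<^sup>+ x. ennreal (Z x * \<bar>X x\<bar> * indicator {y. \<bar>X y\<bar> > real n} x) \<partial>M) \<le> 1"
    unfolding eventually_sequentially by (meson SUP_upper order.trans order_less_imp_le order_refl)
  show ?thesis
  proof (rule that)
    show "0 \<le> real n + 1" by simp
    fix Z assume Z: "Z \<in> D"
    have Z_props: "Z \<in> borel_measurable M" "\<And>x. x \<in> space M \<Longrightarrow> 0 \<le> Z x" "(\<integral>\<^sup>+ x. Z x \<partial>M) = 1"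
      using D[OF Z] unfolding is_density_def by auto
    have "(\<integral>\<^sup>+ x. ennreal (Z x * \<bar>X x\<bar>) \<partial>M)
        \<le> (\<integral>\<^sup>+ x. ennreal (real n) * ennreal (Z x)
              + ennreal (Z x * \<bar>X x\<bar> * indicator {y. \<bar>X y\<bar> > real n} x) \<partial>M)"
    proof (rule nn_integral_mono)
      fix x assume x: "x \<in> space M"
      show "ennreal (Z x * \<bar>X x\<bar>) \<le> ennreal (real n) * ennreal (Z x)
          + ennreal (Z x * \<bar>X x\<bar> * indicator {y. \<bar>X y\<bar> > real n} x)"
      proof (cases "real n < \<bar>X x\<bar>")
        case False
        then have "Z x * \<bar>X x\<bar> \<le> real n * Z x"
          using mult_left_mono[of "\<bar>X x\<bar>" "real n" "Z x"] Z_props(2)[OF x] by (simp add: mult.commute)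
        then show ?thesis
          using Z_props(2)[OF x] by (simp add: ennreal_leI add_increasing2 flip: ennreal_mult)
      qed (simp add: add_increasing)
    qed
    also have "\<dots> \<le> ennreal (real n) * 1 + 1"
      using Z_props n[OF Z] by (subst nn_integral_add) (auto simp: nn_integral_cmult intro!: add_mono)
    finally show "(\<integral>\<^sup>+ x. ennreal (Z x * \<bar>X x\<bar>) \<partial>M) \<le> ennreal (real n + 1)"
      by (simp add: ennreal_plus)
  qed
qed

lemma expQ_eq_integral_if_bounded:
  fixes X :: "'a \<Rightarrow> real"
  assumes Z: "is_density M Z" and [measurable]: "X \<in> borel_measurable M"
    and bound: "(\<integral>\<^sup>+ x. ennreal (Z x * \<bar>X x\<bar>) \<partial>M) \<le> ennreal C" and "0 \<le> C"
  shows "integrable M (\<lambda>x. Z x * X x)" "expQ M Z X = ereal (\<integral>x. Z x * X x \<partial>M)"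
    "- C \<le> (\<integral>x. Z x * X x \<partial>M)"
proof -
  have Z_props: "Z \<in> borel_measurable M" "\<And>x. x \<in> space M \<Longrightarrow> 0 \<le> Z x"
    using Z unfolding is_density_def by auto
  have norm_eq: "(\<integral>\<^sup>+ x. ennreal \<bar>Z x * X x\<bar> \<partial>M) = (\<integral>\<^sup>+ x. ennreal (Z x * \<bar>X x\<bar>) \<partial>M)"
    using Z_props(2) by (intro nn_integral_cong) (simp add: abs_mult)
  show int: "integrable M (\<lambda>x. Z x * X x)"
    using le_less_trans[OF bound ennreal_less_top] Z_props(1) by (intro integrableI_bounded) (auto simp: norm_eq)
  show "expQ M Z X = ereal (\<integral>x. Z x * X x \<partial>M)"
    unfolding expQ_def by (rule ext_int_eq_integral[OF int])
  have "\<bar>\<integral>x. Z x * X x \<partial>M\<bar> \<le> (\<integral>x. \<bar>Z x * X x\<bar> \<partial>M)"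
    using integral_norm_bound[of M "\<lambda>x. Z x * X x"] by simp
  also have "\<dots> = enn2real (\<integral>\<^sup>+ x. ennreal (Z x * \<bar>X x\<bar>) \<partial>M)"
    using Z_props(1) by (subst integral_eq_nn_integral) (auto simp: norm_eq)
  also have "\<dots> \<le> C"
    using enn2real_mono[OF bound] \<open>0 \<le> C\<close> by simp
  finally show "- C \<le> (\<integral>x. Z x * X x \<partial>M)" by simp
qed

lemma (in weighted_var) integrable_if_L1_D:
  assumes "L1_D M (D_mu M mu) X"
  shows "integrable M X"
proof -
  obtain C where C: "0 \<le> C" "\<And>Z. Z \<in> D_mu M mu \<Longrightarrow> (\<integral>\<^sup>+ x. ennreal (Z x * \<bar>X x\<bar>) \<partial>M) \<le> ennreal C"
    using L1_D_bounded[OF assms D_mu_is_density[where mu=mu]] by blast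
  have "X \<in> borel_measurable M" using assms by (simp add: L1_D_def)
  then show ?thesis
    using expQ_eq_integral_if_bounded(1)[OF D_mu_is_density[OF one_in_D_mu] _ C(2)[OF one_in_D_mu] C(1)]
    by simp
qed

context weighted_var
begin

lemma u_contrib_eq_if_comonotone:
  fixes X W :: "'a \<Rightarrow> real"
  assumes cm: "comonotone M X W" and X: "integrable M X" and W: "integrable M W"
    and bounded_X: "\<And>Z. Z \<in> D_mu M mu \<Longrightarrow> (\<integral>\<^sup>+ x. ennreal (Z x * \<bar>X x\<bar>) \<partial>M) \<le> ennreal CX"
    and bounded_W: "\<And>Z. Z \<in> D_mu M mu \<Longrightarrow> (\<integral>\<^sup>+ x. ennreal (Z x * \<bar>W x\<bar>) \<partial>M) \<le> ennreal CW"
    and "0 \<le> CW"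
  shows "u_contrib M mu X W = u_mu M mu X"
proof -
  have [measurable]: "X \<in> borel_measurable M" "W \<in> borel_measurable M" using X W by auto
  define S where "S = (\<lambda>x. X x + W x)"
  have [measurable]: "S \<in> borel_measurable M" unfolding S_def by measurable
  have family: "(\<lambda>(l, x). tail_density M S l x) \<in> borel_measurable (mu \<Otimes>\<^sub>M M)"
    using M.borel_measurable_tail_density
    by (subst measurable_cong_sets[OF sets_pair_measure_cong[OF sets_mu refl] refl]) simp
  have D_lam: "tail_density M S l \<in> D_lam M l" if "0 < l" "l \<le> 1" for l
    using that by (intro M.tail_density_in_D_lam) auto
  define Z where "Z = mixture mu (tail_density M S)"
  have Z: "Z \<in> D_mu M mu" unfolding Z_def by (rule mixture_in_D_mu[OF family D_lam])
  have "expQ M Z X = u_mu M mu X" unfolding Z_def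
  proof (rule expQ_mixture_eq_u_mu[OF family D_lam])
    show "(\<integral>\<^sup>+ x. ennreal (mixture mu (tail_density M S) x * \<bar>X x\<bar>) \<partial>M) \<noteq> \<infinity>"
      using bounded_X[OF Z] by (auto simp: Z_def top_unique)
    show "expQ M (tail_density M S l) X = u_lam M l X" if "0 < l" "l \<le> 1" for l
      unfolding S_def using M.expQ_tail_density_comonotone[OF cm X W that] .
  qed auto
  moreover have "expQ M Z W = u_mu M mu W" unfolding Z_def
  proof (rule expQ_mixture_eq_u_mu[OF family D_lam])
    show "(\<integral>\<^sup>+ x. ennreal (mixture mu (tail_density M S) x * \<bar>W x\<bar>) \<partial>M) \<noteq> \<infinity>"
      using bounded_W[OF Z] by (auto simp: Z_def top_unique)
    have "S = (\<lambda>x. W x + X x)" by (simp add: S_def add.commute)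
    then show "expQ M (tail_density M S l) W = u_lam M l W" if "0 < l" "l \<le> 1" for l
      using M.expQ_tail_density_comonotone[OF comonotone_sym[OF cm] W X that] by simp
  qed auto
  moreover have "expQ M Z W = ereal (\<integral>x. Z x * W x \<partial>M)"
    using Z bounded_W[OF Z] \<open>0 \<le> CW\<close> by (intro expQ_eq_integral_if_bounded) (auto simp: D_mu_def)
  ultimately have "Z \<in> extreme_mu M mu W" and "expQ M Z X = u_mu M mu X"
    using Z by (auto simp: extreme_mu_def)
  then have "u_contrib M mu X W \<le> u_mu M mu X"
    unfolding u_contrib_def by (metis INF_lower)
  moreover have "u_mu M mu X \<le> u_contrib M mu X W"
    unfolding u_contrib_def
  proof (rule INF_greatest)
    fix Q assume "Q \<in> extreme_mu M mu W"
    then show "u_mu M mu X \<le> expQ M Q X" by (simp add: extreme_mu_def D_mu_def)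
  qed
  ultimately show ?thesis by (rule antisym)
qed

lemma u_mu_subadditive_if_u_contrib_eq:
  fixes X W :: "'a \<Rightarrow> real"
  assumes [measurable]: "X \<in> borel_measurable M" "W \<in> borel_measurable M"
    and bounded_X: "\<And>Z. Z \<in> D_mu M mu \<Longrightarrow> (\<integral>\<^sup>+ x. ennreal (Z x * \<bar>X x\<bar>) \<partial>M) \<le> ennreal CX"
    and bounded_W: "\<And>Z. Z \<in> D_mu M mu \<Longrightarrow> (\<integral>\<^sup>+ x. ennreal (Z x * \<bar>W x\<bar>) \<partial>M) \<le> ennreal CW"
    and "0 \<le> CX" "0 \<le> CW"
    and eq: "u_contrib M mu X W = u_mu M mu X"
  shows "\<bar>u_mu M mu X\<bar> \<noteq> \<infinity>" "\<bar>u_mu M mu W\<bar> \<noteq> \<infinity>"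
    "u_mu M mu (\<lambda>\<omega>. X \<omega> + W \<omega>) \<le> u_mu M mu X + u_mu M mu W"
proof -
  have X_Q: "integrable M (\<lambda>x. Q x * X x)" "expQ M Q X = ereal (\<integral>x. Q x * X x \<partial>M)"
    "- CX \<le> (\<integral>x. Q x * X x \<partial>M)" if "Q \<in> D_mu M mu" for Q
    using expQ_eq_integral_if_bounded[OF D_mu_is_density[OF that] _ bounded_X[OF that] \<open>0 \<le> CX\<close>] by simp_all
  have W_Q: "integrable M (\<lambda>x. Q x * W x)" "expQ M Q W = ereal (\<integral>x. Q x * W x \<partial>M)"
    if "Q \<in> D_mu M mu" for Q
    using expQ_eq_integral_if_bounded[OF D_mu_is_density[OF that] _ bounded_W[OF that] \<open>0 \<le> CW\<close>] by simp_all
  have "u_mu M mu X \<le> expQ M (\<lambda>_. 1) X" using one_in_D_mu by (simp add: D_mu_def)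
  then have "u_contrib M mu X W \<noteq> \<infinity>" using eq X_Q(2)[OF one_in_D_mu] by auto
  then obtain Q0 where "Q0 \<in> extreme_mu M mu W"
    unfolding u_contrib_def by (metis INF_empty equals0I top_ereal_def)
  then show fin_W: "\<bar>u_mu M mu W\<bar> \<noteq> \<infinity>" by (auto simp: extreme_mu_def)
  have "ereal (- CX) \<le> u_contrib M mu X W"
    unfolding u_contrib_def
  proof (rule INF_greatest)
    fix Q assume "Q \<in> extreme_mu M mu W"
    then have "Q \<in> D_mu M mu" by (simp add: extreme_mu_def)
    then show "ereal (- CX) \<le> expQ M Q X" using X_Q(2,3) by simp
  qed
  with eq \<open>u_contrib M mu X W \<noteq> \<infinity>\<close> show fin_X: "\<bar>u_mu M mu X\<bar> \<noteq> \<infinity>" by auto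
  show "u_mu M mu (\<lambda>\<omega>. X \<omega> + W \<omega>) \<le> u_mu M mu X + u_mu M mu W"
  proof (rule ereal_le_epsilon2)
    fix e :: real assume "0 < e"
    then have "u_contrib M mu X W < u_mu M mu X + ereal e"
      using eq fin_X by (cases "u_mu M mu X") auto
    then obtain Q where Q: "Q \<in> extreme_mu M mu W" "expQ M Q X < u_mu M mu X + ereal e"
      unfolding u_contrib_def by (auto simp: INF_less_iff)
    then have QD: "Q \<in> D_mu M mu" and QW: "expQ M Q W = u_mu M mu W" by (auto simp: extreme_mu_def)
    have "u_mu M mu (\<lambda>\<omega>. X \<omega> + W \<omega>) \<le> expQ M Q (\<lambda>\<omega>. X \<omega> + W \<omega>)"
      using QD by (auto simp: D_mu_def)
    also have "\<dots> = expQ M Q X + expQ M Q W"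
      using X_Q(1,2)[OF QD] W_Q(1,2)[OF QD]
      by (simp add: expQ_def distrib_left ext_int_eq_integral)
    also have "\<dots> \<le> u_mu M mu X + ereal e + u_mu M mu W"
      using Q(2) QW by (intro add_mono) auto
    finally show "u_mu M mu (\<lambda>\<omega>. X \<omega> + W \<omega>) \<le> u_mu M mu X + u_mu M mu W + ereal e"
      by (simp add: ac_simps)
  qed
qed

end

theorem proposition5p10:
  fixes M :: "'a measure" and mu :: "real measure" and X W :: "'a \<Rightarrow> real"
  assumes "prob_space M"
    and "prob_space mu" and "sets mu = sets borel" and "emeasure mu {0<..1} = 1"
    and "measure_support mu = {0..1}"
    and "L1_D M (D_mu M mu) X" and "L1_D M (D_mu M mu) W"
  shows "u_contrib M mu X W = u_mu M mu X \<longleftrightarrow> comonotone M X W"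
proof -
  interpret weighted_var M mu using assms(1-4) by (simp add: weighted_var_def weighted_var_axioms_def)
  obtain CX where CX: "0 \<le> CX"
      "\<And>Z. Z \<in> D_mu M mu \<Longrightarrow> (\<integral>\<^sup>+ x. ennreal (Z x * \<bar>X x\<bar>) \<partial>M) \<le> ennreal CX"
    using L1_D_bounded[OF assms(6) D_mu_is_density[where mu=mu]] by blast
  obtain CW where CW: "0 \<le> CW"
      "\<And>Z. Z \<in> D_mu M mu \<Longrightarrow> (\<integral>\<^sup>+ x. ennreal (Z x * \<bar>W x\<bar>) \<partial>M) \<le> ennreal CW"
    using L1_D_bounded[OF assms(7) D_mu_is_density[where mu=mu]] by blast
  have X: "integrable M X" by (rule integrable_if_L1_D[OF assms(6)])
  have W: "integrable M W" by (rule integrable_if_L1_D[OF assms(7)])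
  show ?thesis
  proof
    assume eq: "u_contrib M mu X W = u_mu M mu X"
    have "X \<in> borel_measurable M" "W \<in> borel_measurable M" using X W by auto
    note subadditive = u_mu_subadditive_if_u_contrib_eq[OF this CX(2) CW(2) CX(1) CW(1) eq]
    show "comonotone M X W" by (rule comonotone_if_u_mu_subadditive[OF assms(5) X W subadditive])
  next
    assume "comonotone M X W"
    then show "u_contrib M mu X W = u_mu M mu X"
      by (rule u_contrib_eq_if_comonotone[OF _ X W CX(2) CW(2) CW(1)])
  qed
qed

end
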